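(* Assume $g$ is of $n^\alpha$ type. Then for any $G\in C(\mathbb T)$, $c\ge0$ and $\delta>0$, $$\lim_{N\to\infty}\mathcal R^N_c\big[|\langle G,\pi^N\rangle-\langle G,\pi\rangle|>\delta\big]=0,\qquad \pi(dx)=c\,dx+\sum_{j\in J_c}(\lambda_j\Phi(c))^{1/\alpha}\delta_{x_j}(dx).$$ Moreover, for all $j\in J_s$, $\lim_{N\to\infty}\mathcal R^N_c\big[|N^{-\beta_j/\alpha}\xi(k_{j,N})-(\lambda_j\Phi(c))^{1/\alpha}|>\delta\big]=0.$
   Context: $\mathbb N_0=\{0,1,\dots\}$, $\mathbb T=[0,1)$ unit torus, $\langle G,\mu\rangle=\int Gd\mu$. $g:\mathbb N_0\to[0,\infty)$ with $g(n)=0$ iff $n=0$, $|g(n+1)-g(n)|\le g^*$, nondecreasing, $g(n)/n^\alpha\to1$ with $\alpha\in(0,1]$ ($n^\alpha$ type). $g(n)!=\prod_{i\le n}g(i)$, $g(0)!=1$, $Z(\phi)=\sum_n\phi^n/g(n)!$, $\mathcal P_\phi(n)=\phi^n/(g(n)!Z(\phi))$ for $\phi\ge0$, $R(\phi)$ the mean of $\mathcal P_\phi$, $\Phi=R^{-1}$. Finite index set $J$; for $j\in J$, pairwise distinct $x_j\in\mathbb T$, $\beta_j\in\mathbb R$, $\lambda_j>0$; $J_s=\{j:\beta_j>\alpha\}$, $J_c=\{j:\beta_j=\alpha\}$. For $N>|J|$: $\mathbb T_N=\mathbb Z/N\mathbb Z$, $k_{j,N}=\lfloor x_jN\rfloor$,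 $\mathfrak D_N=\{k_{j,N}\}$, $\mathfrak D_{s,N}=\{k_{j,N}:j\in J_s\}$. $\mathcal R^N_c$ is the product probability measure on $\mathbb N_0^{\mathbb T_N}$ (configurations $\xi$) with marginal $\mathcal P_{\Phi(c)}$ at $k\notin\mathfrak D_N$ and $\mathcal P_{\lambda_jN^{\beta_j}\Phi(c)}$ at $k_{j,N}$. $\pi^N=N^{-1}\sum_{k\in\mathbb T_N\setminus\mathfrak D_{s,N}}\xi(k)\delta_{k/N}$. *)

theory Defs
  imports "HOL-Analysis.Analysis" "HOL-Probability.Probability"
begin

definition n_alpha_type :: "(nat \<Rightarrow> real) \<Rightarrow> real \<Rightarrow> real \<Rightarrow> bool" where
  "n_alpha_type g gs \<alpha> \<longleftrightarrow>
     (\<forall>n. g n \<ge> 0) \<and> (\<forall>n. g n = 0 \<longleftrightarrow> n = 0) \<and>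
     (\<forall>n. \<bar>g (Suc n) - g n\<bar> \<le> gs) \<and> mono g \<and>
     0 < \<alpha> \<and> \<alpha> \<le> 1 \<and>
     ((\<lambda>n. g n / real n powr \<alpha>) \<longlongrightarrow> 1) sequentially"

definition gfact :: "(nat \<Rightarrow> real) \<Rightarrow> nat \<Rightarrow> real" where
  "gfact g n = (\<Prod>i\<in>{1..n}. g i)"

definition Zpart :: "(nat \<Rightarrow> real) \<Rightarrow> real \<Rightarrow> real" where
  "Zpart g \<phi> = (\<Sum>n. \<phi> ^ n / gfact g n)"

definition Pgc :: "(nat \<Rightarrow> real) \<Rightarrow> real \<Rightarrow> nat \<Rightarrow> real" where
  "Pgc g \<phi> n = \<phi> ^ n / (gfact g n * Zpart g \<phi>)"

definition Rmean :: "(nat \<Rightarrow> real) \<Rightarrow> real \<Rightarrow> real" where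
  "Rmean g \<phi> = (\<Sum>n. real n * Pgc g \<phi> n)"

definition Phi :: "(nat \<Rightarrow> real) \<Rightarrow> real \<Rightarrow> real" where
  "Phi g c = (THE \<phi>. \<phi> \<ge> 0 \<and> Rmean g \<phi> = c)"

definition Ppmf :: "(nat \<Rightarrow> real) \<Rightarrow> real \<Rightarrow> nat pmf" where
  "Ppmf g \<phi> = embed_pmf (Pgc g \<phi>)"

definition kjN :: "real \<Rightarrow> nat \<Rightarrow> nat" where
  "kjN xj N = nat \<lfloor>xj * real N\<rfloor>"

text \<open>The product measure R^N_c on configurations xi : T_N \<rightarrow> N_0
  (T_N = {0..<N}; values outside T_N are fixed to 0).\<close>
definition RN :: "(nat \<Rightarrow> real) \<Rightarrow> 'j set \<Rightarrow> ('j \<Rightarrow> real) \<Rightarrow> ('j \<Rightarrow> real) \<Rightarrow> ('j \<Rightarrow> real)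
                  \<Rightarrow> real \<Rightarrow> nat \<Rightarrow> (nat \<Rightarrow> nat) pmf" where
  "RN g J x \<beta> lam c N =
     Pi_pmf {..<N} 0 (\<lambda>k. if \<exists>j\<in>J. kjN (x j) N = k
        then (let j = (SOME j. j \<in> J \<and> kjN (x j) N = k)
              in Ppmf g (lam j * real N powr \<beta> j * Phi g c))
        else Ppmf g (Phi g c))"

definition pairN :: "(real \<Rightarrow> real) \<Rightarrow> 'j set \<Rightarrow> ('j \<Rightarrow> real) \<Rightarrow> ('j \<Rightarrow> real) \<Rightarrow> real
                     \<Rightarrow> nat \<Rightarrow> (nat \<Rightarrow> nat) \<Rightarrow> real" where
  "pairN G J x \<beta> \<alpha> N \<xi> =
     (\<Sum>k\<in>{..<N} - {kjN (x j) N | j. j \<in> J \<and> \<beta> j > \<alpha>}. real (\<xi> k) * G (real k / real N)) / real N"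

definition pairLim :: "(nat \<Rightarrow> real) \<Rightarrow> (real \<Rightarrow> real) \<Rightarrow> 'j set \<Rightarrow> ('j \<Rightarrow> real) \<Rightarrow> ('j \<Rightarrow> real)
                       \<Rightarrow> ('j \<Rightarrow> real) \<Rightarrow> real \<Rightarrow> real \<Rightarrow> real" where
  "pairLim g G J x \<beta> lam \<alpha> c =
     c * integral {0..1} G +
     (\<Sum>j\<in>{j\<in>J. \<beta> j = \<alpha>}. (lam j * Phi g c) powr (1 / \<alpha>) * G (x j))"

end

theory Submission
  imports Defs
begin

text \<open>
  Under \<open>RN\<close> the occupation numbers are independent. Off the sites they are i.i.d. with law
  \<open>Ppmf g (Phi g c)\<close>, whose mean is \<open>c\<close>, so by Chebyshev's inequality the bulk part of
  \<open>pairN\<close> is close to a Riemann sum of \<open>c G\<close>. At the site of \<open>x j\<close> the fugacity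
  \<open>\<phi> = lam j N\<^bsup>\<beta> j\<^esup> \<Phi>(c)\<close> is large, and since \<open>g n \<sim> n\<^sup>\<alpha>\<close> the weights \<open>\<phi>\<^sup>n / gfact g n\<close>
  grow geometrically for \<open>n\<close> below \<open>\<phi>\<^bsup>1/\<alpha>\<^esup>\<close> and decay geometrically above it. Hence the
  occupation number at the site is \<open>(lam j \<Phi>(c))\<^bsup>1/\<alpha>\<^esup> N\<^bsup>\<beta> j/\<alpha>\<^esup>\<close> to first order: after
  division by \<open>N\<close> it gives an atom of the limit measure if \<open>\<beta> j = \<alpha>\<close> and vanishes if \<open>\<beta> j < \<alpha>\<close>.
\<close>

section \<open>Convergence in probability\<close>

lemma measure_pmf_prob_tendsto_0I:
  assumes "(b \<longlongrightarrow> 0) sequentially"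
    and "eventually (\<lambda>N. measure_pmf.prob (M N) (A N) \<le> b N) sequentially"
  shows "((\<lambda>N. measure_pmf.prob (M N) (A N)) \<longlongrightarrow> 0) sequentially"
  by (rule Lim_null_comparison[OF _ assms(1)]) (use assms(2) in simp)

definition conv_prob :: "(nat \<Rightarrow> 'a pmf) \<Rightarrow> (nat \<Rightarrow> 'a \<Rightarrow> real) \<Rightarrow> real \<Rightarrow> bool" where
  "conv_prob M X c \<longleftrightarrow>
     (\<forall>\<delta>>0. ((\<lambda>N. measure_pmf.prob (M N) {\<xi>. \<bar>X N \<xi> - c\<bar> > \<delta>}) \<longlongrightarrow> 0) sequentially)"

lemma conv_probI_one_sided:
  assumes above: "\<And>b. c < b \<Longrightarrow> ((\<lambda>N. measure_pmf.prob (M N) {\<xi>. X N \<xi> > b}) \<longlongrightarrow> 0) sequentially"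
    and below: "\<And>b. b < c \<Longrightarrow> ((\<lambda>N. measure_pmf.prob (M N) {\<xi>. X N \<xi> < b}) \<longlongrightarrow> 0) sequentially"
  shows "conv_prob M X c"
  unfolding conv_prob_def
proof (intro allI impI)
  fix \<delta> :: real assume "\<delta> > 0"
  let ?P = "\<lambda>N A. measure_pmf.prob (M N) A"
  have "?P N {\<xi>. \<bar>X N \<xi> - c\<bar> > \<delta>} \<le> ?P N ({\<xi>. X N \<xi> > c + \<delta>} \<union> {\<xi>. X N \<xi> < c - \<delta>})" for N
    by (intro measure_pmf.finite_measure_mono) auto
  also have "\<dots> N \<le> ?P N {\<xi>. X N \<xi> > c + \<delta>} + ?P N {\<xi>. X N \<xi> < c - \<delta>}" for N
    by (rule measure_Un_le) auto
  finally show "((\<lambda>N. ?P N {\<xi>. \<bar>X N \<xi> - c\<bar> > \<delta>}) \<longlongrightarrow> 0) sequentially"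
    using tendsto_add[OF above below, of "c + \<delta>" "c - \<delta>"] \<open>\<delta> > 0\<close>
    by (intro measure_pmf_prob_tendsto_0I[OF _ always_eventually]) auto
qed

lemma conv_prob_cong:
  assumes "eventually (\<lambda>N. M N = M' N) sequentially"
    and "eventually (\<lambda>N. \<forall>\<xi>. X N \<xi> = Y N \<xi>) sequentially"
  shows "conv_prob M X c \<longleftrightarrow> conv_prob M' Y c"
proof -
  have "((\<lambda>N. measure_pmf.prob (M N) {\<xi>. \<bar>X N \<xi> - c\<bar> > \<delta>}) \<longlongrightarrow> 0) sequentially
    \<longleftrightarrow> ((\<lambda>N. measure_pmf.prob (M' N) {\<xi>. \<bar>Y N \<xi> - c\<bar> > \<delta>}) \<longlongrightarrow> 0) sequentially" for \<delta>
    by (rule tendsto_cong) (use assms in eventually_elim, simp)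
  then show ?thesis
    unfolding conv_prob_def by simp
qed

lemma conv_prob_map_pmf:
  "conv_prob (\<lambda>N. map_pmf (f N) (M N)) X c \<longleftrightarrow> conv_prob M (\<lambda>N \<xi>. X N (f N \<xi>)) c"
  by (simp add: conv_prob_def vimage_def)

lemma conv_prob_tendsto:
  assumes "(d \<longlongrightarrow> c) sequentially"
  shows "conv_prob M (\<lambda>N _. d N) c"
  unfolding conv_prob_def
proof (intro allI impI)
  fix \<delta> :: real assume "\<delta> > 0"
  with assms have "eventually (\<lambda>N. \<bar>d N - c\<bar> < \<delta>) sequentially"
    by (auto dest: tendstoD simp: dist_real_def)
  then show "((\<lambda>N. measure_pmf.prob (M N) {\<xi>. \<bar>d N - c\<bar> > \<delta>}) \<longlongrightarrow> 0) sequentially"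
    by (intro measure_pmf_prob_tendsto_0I[OF tendsto_const]) (auto elim: eventually_mono)
qed

lemma conv_prob_add:
  assumes X: "conv_prob M X a" and Y: "conv_prob M Y b"
  shows "conv_prob M (\<lambda>N \<xi>. X N \<xi> + Y N \<xi>) (a + b)"
  unfolding conv_prob_def
proof (intro allI impI)
  fix \<delta> :: real assume "\<delta> > 0"
  let ?P = "\<lambda>N A. measure_pmf.prob (M N) A"
  have "{\<xi>. \<bar>X N \<xi> + Y N \<xi> - (a + b)\<bar> > \<delta>}
        \<subseteq> {\<xi>. \<bar>X N \<xi> - a\<bar> > \<delta>/2} \<union> {\<xi>. \<bar>Y N \<xi> - b\<bar> > \<delta>/2}" for N
  proof
    fix \<xi> assume "\<xi> \<in> {\<xi>. \<bar>X N \<xi> + Y N \<xi> - (a + b)\<bar> > \<delta>}"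
    moreover have "\<bar>X N \<xi> + Y N \<xi> - (a + b)\<bar> \<le> \<bar>X N \<xi> - a\<bar> + \<bar>Y N \<xi> - b\<bar>"
      using abs_triangle_ineq[of "X N \<xi> - a" "Y N \<xi> - b"] by (simp add: algebra_simps)
    ultimately show "\<xi> \<in> {\<xi>. \<bar>X N \<xi> - a\<bar> > \<delta>/2} \<union> {\<xi>. \<bar>Y N \<xi> - b\<bar> > \<delta>/2}"
      by auto
  qed
  then have "?P N {\<xi>. \<bar>X N \<xi> + Y N \<xi> - (a + b)\<bar> > \<delta>}
        \<le> ?P N ({\<xi>. \<bar>X N \<xi> - a\<bar> > \<delta>/2} \<union> {\<xi>. \<bar>Y N \<xi> - b\<bar> > \<delta>/2})" for N
    by (intro measure_pmf.finite_measure_mono) auto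
  also have "\<dots> N \<le> ?P N {\<xi>. \<bar>X N \<xi> - a\<bar> > \<delta>/2} + ?P N {\<xi>. \<bar>Y N \<xi> - b\<bar> > \<delta>/2}" for N
    by (rule measure_Un_le) auto
  finally have bound: "?P N {\<xi>. \<bar>X N \<xi> + Y N \<xi> - (a + b)\<bar> > \<delta>}
      \<le> ?P N {\<xi>. \<bar>X N \<xi> - a\<bar> > \<delta>/2} + ?P N {\<xi>. \<bar>Y N \<xi> - b\<bar> > \<delta>/2}" for N .
  have "\<delta>/2 > 0" using \<open>\<delta> > 0\<close> by simp
  then have "((\<lambda>N. ?P N {\<xi>. \<bar>X N \<xi> - a\<bar> > \<delta>/2} + ?P N {\<xi>. \<bar>Y N \<xi> - b\<bar> > \<delta>/2}) \<longlongrightarrow> 0) sequentially"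
    using X Y unfolding conv_prob_def by (intro tendsto_add_zero) blast+
  then show "((\<lambda>N. ?P N {\<xi>. \<bar>X N \<xi> + Y N \<xi> - (a + b)\<bar> > \<delta>}) \<longlongrightarrow> 0) sequentially"
    by (rule measure_pmf_prob_tendsto_0I) (use bound in simp)
qed

lemma conv_prob_sum:
  assumes "finite A" and "\<And>i. i \<in> A \<Longrightarrow> conv_prob M (X i) (c i)"
  shows "conv_prob M (\<lambda>N \<xi>. \<Sum>i\<in>A. X i N \<xi>) (\<Sum>i\<in>A. c i)"
  using assms by (induction A rule: finite_induct) (auto intro: conv_prob_add conv_prob_tendsto)

lemma conv_prob_mult_tendsto:
  assumes X: "conv_prob M X a" and d: "(d \<longlongrightarrow> b) sequentially"
  shows "conv_prob M (\<lambda>N \<xi>. X N \<xi> * d N) (a * b)"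
  unfolding conv_prob_def
proof (intro allI impI)
  fix \<delta> :: real assume \<delta>: "\<delta> > 0"
  obtain K where K: "K > 0" "\<And>N. \<bar>d N\<bar> \<le> K"
    using convergent_imp_Bseq[OF convergentI[OF d]] by (auto elim: BseqE)
  have "((\<lambda>N. \<bar>a\<bar> * \<bar>d N - b\<bar>) \<longlongrightarrow> \<bar>a\<bar> * \<bar>b - b\<bar>) sequentially"
    by (intro tendsto_intros d)
  then have "eventually (\<lambda>N. \<bar>a\<bar> * \<bar>d N - b\<bar> < \<delta>/2) sequentially"
    using \<delta> by (intro order_tendstoD) auto
  then have "eventually (\<lambda>N. measure_pmf.prob (M N) {\<xi>. \<bar>X N \<xi> * d N - a * b\<bar> > \<delta>}
               \<le> measure_pmf.prob (M N) {\<xi>. \<bar>X N \<xi> - a\<bar> > \<delta> / (2 * K)}) sequentially"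
  proof eventually_elim
    case (elim N)
    have "\<bar>X N \<xi> - a\<bar> > \<delta> / (2 * K)" if "\<bar>X N \<xi> * d N - a * b\<bar> > \<delta>" for \<xi>
    proof (rule ccontr)
      assume "\<not> ?thesis"
      then have "\<bar>X N \<xi> - a\<bar> * \<bar>d N\<bar> \<le> \<delta> / (2 * K) * K"
        using K by (intro mult_mono) auto
      moreover have "X N \<xi> * d N - a * b = (X N \<xi> - a) * d N + a * (d N - b)"
        by (simp add: algebra_simps)
      then have "\<bar>X N \<xi> * d N - a * b\<bar> \<le> \<bar>X N \<xi> - a\<bar> * \<bar>d N\<bar> + \<bar>a\<bar> * \<bar>d N - b\<bar>"
        by (metis abs_mult abs_triangle_ineq)
      ultimately show False using that elim K by (simp add: field_simps)
    qed
    then show ?case by (intro measure_pmf.finite_measure_mono) auto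
  qed
  moreover have "((\<lambda>N. measure_pmf.prob (M N) {\<xi>. \<bar>X N \<xi> - a\<bar> > \<delta> / (2 * K)}) \<longlongrightarrow> 0) sequentially"
    using X \<delta> K unfolding conv_prob_def by simp
  ultimately show "((\<lambda>N. measure_pmf.prob (M N) {\<xi>. \<bar>X N \<xi> * d N - a * b\<bar> > \<delta>}) \<longlongrightarrow> 0) sequentially"
    by (intro measure_pmf_prob_tendsto_0I)
qed

lemma conv_prob_second_moment:
  assumes int: "\<And>N. integrable (measure_pmf (M N)) (\<lambda>\<xi>. X N \<xi> ^ 2)"
    and lim: "((\<lambda>N. measure_pmf.expectation (M N) (\<lambda>\<xi>. X N \<xi> ^ 2)) \<longlongrightarrow> 0) sequentially"
  shows "conv_prob M X 0"
  unfolding conv_prob_def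
proof (intro allI impI)
  fix \<delta> :: real assume \<delta>: "\<delta> > 0"
  have "{\<xi>. \<bar>X N \<xi> - 0\<bar> > \<delta>} \<subseteq> {\<xi> \<in> space (M N). X N \<xi> ^ 2 \<ge> \<delta> ^ 2}" for N
    using \<delta> by (auto simp: abs_le_square_iff[symmetric])
  then have "measure_pmf.prob (M N) {\<xi>. \<bar>X N \<xi> - 0\<bar> > \<delta>}
        \<le> measure_pmf.prob (M N) {\<xi> \<in> space (M N). X N \<xi> ^ 2 \<ge> \<delta> ^ 2}" for N
    by (intro measure_pmf.finite_measure_mono) auto
  also have "\<dots> N \<le> measure_pmf.expectation (M N) (\<lambda>\<xi>. X N \<xi> ^ 2) / \<delta> ^ 2" for N
    using \<delta> by (intro integral_Markov_inequality_measure[OF int, where A = "{}"]) auto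
  finally have bound: "measure_pmf.prob (M N) {\<xi>. \<bar>X N \<xi> - 0\<bar> > \<delta>}
      \<le> measure_pmf.expectation (M N) (\<lambda>\<xi>. X N \<xi> ^ 2) / \<delta> ^ 2" for N .
  have "((\<lambda>N. measure_pmf.expectation (M N) (\<lambda>\<xi>. X N \<xi> ^ 2) / \<delta> ^ 2) \<longlongrightarrow> 0) sequentially"
    by (rule tendsto_divide_zero[OF lim])
  then show "((\<lambda>N. measure_pmf.prob (M N) {\<xi>. \<bar>X N \<xi> - 0\<bar> > \<delta>}) \<longlongrightarrow> 0) sequentially"
    by (rule measure_pmf_prob_tendsto_0I) (use bound in simp)
qed

section \<open>Discrete distributions\<close>

lemma pmf_nat_expectation_sums:
  fixes p :: "nat pmf" and h :: "nat \<Rightarrow> real"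
  assumes "summable (\<lambda>n. pmf p n * \<bar>h n\<bar>)"
  shows "integrable (measure_pmf p) h"
    and "(\<lambda>n. pmf p n * h n) sums measure_pmf.expectation p h"
proof -
  have int: "integrable (count_space UNIV) (\<lambda>n. pmf p n *\<^sub>R h n)"
    using assms by (simp add: integrable_count_space_nat_iff abs_mult)
  then show "integrable (measure_pmf p) h"
    unfolding measure_pmf_eq_density by (subst integrable_density) auto
  have "measure_pmf.expectation p h = integral\<^sup>L (count_space UNIV) (\<lambda>n. pmf p n *\<^sub>R h n)"
    unfolding measure_pmf_eq_density by (subst integral_density) auto
  with sums_integral_count_space_nat[OF int]
  show "(\<lambda>n. pmf p n * h n) sums measure_pmf.expectation p h" by simp
qed

lemma map_pmf_Pi_pmf_component:
  assumes "finite I" "k \<in> I"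
  shows "map_pmf (\<lambda>\<xi>. \<xi> k) (Pi_pmf I d p) = p k"
  using Pi_pmf_component[OF assms(1), of k d p] assms(2) by simp

lemma integrable_Pi_pmf_component:
  fixes h :: "'b \<Rightarrow> real"
  assumes "finite I" "k \<in> I" "integrable (measure_pmf (p k)) h"
  shows "integrable (measure_pmf (Pi_pmf I d p)) (\<lambda>\<xi>. h (\<xi> k))"
  using assms(3) integrable_map_pmf_eq[of "\<lambda>\<xi>. \<xi> k" "Pi_pmf I d p" h]
  by (simp add: map_pmf_Pi_pmf_component[OF assms(1,2)])

lemma expectation_Pi_pmf_component:
  fixes h :: "'b \<Rightarrow> real"
  assumes "finite I" "k \<in> I"
  shows "measure_pmf.expectation (Pi_pmf I d p) (\<lambda>\<xi>. h (\<xi> k)) = measure_pmf.expectation (p k) h"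
  using integral_map_pmf[of "\<lambda>\<xi>. \<xi> k" "Pi_pmf I d p" h]
  by (simp add: map_pmf_Pi_pmf_component[OF assms])

lemma expectation_Pi_pmf_two_components:
  fixes hk hl :: "'b \<Rightarrow> real"
  assumes I: "finite I" and kl: "k \<in> I" "l \<in> I" "k \<noteq> l"
    and ik: "integrable (measure_pmf (p k)) hk" and il: "integrable (measure_pmf (p l)) hl"
  shows "integrable (measure_pmf (Pi_pmf I d p)) (\<lambda>\<xi>. hk (\<xi> k) * hl (\<xi> l))"
    and "measure_pmf.expectation (Pi_pmf I d p) (\<lambda>\<xi>. hk (\<xi> k) * hl (\<xi> l))
       = measure_pmf.expectation (p k) hk * measure_pmf.expectation (p l) hl"
proof -
  define X where "X i \<xi> = (if i = k then hk else hl) (\<xi> i)" for i and \<xi> :: "'a \<Rightarrow> 'b"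
  have "prob_space.indep_vars (measure_pmf (Pi_pmf I d p)) (\<lambda>_. borel) X I"
    unfolding X_def
    by (rule prob_space.indep_vars_compose2[OF prob_space_measure_pmf indep_vars_Pi_pmf[OF I]]) auto
  then have ind: "prob_space.indep_vars (measure_pmf (Pi_pmf I d p)) (\<lambda>_. borel) X {k, l}"
    by (rule prob_space.indep_vars_subset[OF prob_space_measure_pmf]) (use kl in auto)
  have int: "integrable (measure_pmf (Pi_pmf I d p)) (X i)" if "i \<in> {k, l}" for i
    using that kl ik il unfolding X_def by (auto intro!: integrable_Pi_pmf_component[OF I])
  have prod: "(\<Prod>i\<in>{k, l}. X i \<xi>) = hk (\<xi> k) * hl (\<xi> l)" for \<xi>
    using kl unfolding X_def by simp
  show "integrable (measure_pmf (Pi_pmf I d p)) (\<lambda>\<xi>. hk (\<xi> k) * hl (\<xi> l))"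
    using prob_space.indep_vars_integrable[OF prob_space_measure_pmf _ ind int] by (simp add: prod)
  have "measure_pmf.expectation (Pi_pmf I d p) (\<lambda>\<xi>. \<Prod>i\<in>{k, l}. X i \<xi>)
        = (\<Prod>i\<in>{k, l}. measure_pmf.expectation (Pi_pmf I d p) (X i))"
    by (rule prob_space.indep_vars_lebesgue_integral[OF prob_space_measure_pmf _ ind int]) simp
  then show "measure_pmf.expectation (Pi_pmf I d p) (\<lambda>\<xi>. hk (\<xi> k) * hl (\<xi> l))
       = measure_pmf.expectation (p k) hk * measure_pmf.expectation (p l) hl"
    using kl unfolding prod by (simp add: X_def[abs_def] expectation_Pi_pmf_component[OF I])
qed

lemma expectation_Pi_pmf_weighted_sum_sq:
  fixes a :: "'i \<Rightarrow> real" and h :: "'b \<Rightarrow> real"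
  assumes I: "finite I" and A: "A \<subseteq> I" and iid: "\<And>k. k \<in> A \<Longrightarrow> p k = q"
    and int: "integrable (measure_pmf q) h" and int2: "integrable (measure_pmf q) (\<lambda>x. h x ^ 2)"
    and centered: "measure_pmf.expectation q h = 0"
  shows "integrable (measure_pmf (Pi_pmf I d p)) (\<lambda>\<xi>. (\<Sum>k\<in>A. a k * h (\<xi> k)) ^ 2)"
    and "measure_pmf.expectation (Pi_pmf I d p) (\<lambda>\<xi>. (\<Sum>k\<in>A. a k * h (\<xi> k)) ^ 2)
       = (\<Sum>k\<in>A. a k ^ 2) * measure_pmf.expectation q (\<lambda>x. h x ^ 2)"
proof -
  let ?E = "measure_pmf.expectation (Pi_pmf I d p)"
  have fin: "finite A" using A I by (rule finite_subset)
  have kl: "integrable (measure_pmf (Pi_pmf I d p)) (\<lambda>\<xi>. h (\<xi> k) * h (\<xi> l)) \<and>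
      ?E (\<lambda>\<xi>. h (\<xi> k) * h (\<xi> l)) = (if k = l then measure_pmf.expectation q (\<lambda>x. h x ^ 2) else 0)"
    if "k \<in> A" "l \<in> A" for k l
  proof (cases "k = l")
    case True
    then show ?thesis
      using that A iid int2 integrable_Pi_pmf_component[OF I, of k p "\<lambda>x. h x ^ 2" d]
        expectation_Pi_pmf_component[OF I, of k d p "\<lambda>x. h x ^ 2"]
      by (auto simp: power2_eq_square)
  next
    case False
    then show ?thesis
      using expectation_Pi_pmf_two_components[where hk = h and hl = h and d = d and p = p,
          OF I _ _ False] that A iid int centered
      by auto
  qed
  have sq: "(\<Sum>k\<in>A. a k * h (\<xi> k)) ^ 2 = (\<Sum>k\<in>A. \<Sum>l\<in>A. a k * a l * (h (\<xi> k) * h (\<xi> l)))" for \<xi>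
    by (simp add: power2_eq_square sum_product mult_ac)
  show "integrable (measure_pmf (Pi_pmf I d p)) (\<lambda>\<xi>. (\<Sum>k\<in>A. a k * h (\<xi> k)) ^ 2)"
    unfolding sq using kl by (intro Bochner_Integration.integrable_sum) simp
  have "?E (\<lambda>\<xi>. (\<Sum>k\<in>A. a k * h (\<xi> k)) ^ 2)
      = (\<Sum>k\<in>A. \<Sum>l\<in>A. a k * a l * ?E (\<lambda>\<xi>. h (\<xi> k) * h (\<xi> l)))"
    unfolding sq using kl by (simp add: Bochner_Integration.integral_sum)
  also have "\<dots> = (\<Sum>k\<in>A. \<Sum>l\<in>A.
      if k = l then a k ^ 2 * measure_pmf.expectation q (\<lambda>x. h x ^ 2) else 0)"
    using kl by (intro sum.cong refl) (simp add: power2_eq_square)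
  also have "\<dots> = (\<Sum>k\<in>A. a k ^ 2) * measure_pmf.expectation q (\<lambda>x. h x ^ 2)"
    using fin by (simp add: sum_distrib_right)
  finally show "?E (\<lambda>\<xi>. (\<Sum>k\<in>A. a k * h (\<xi> k)) ^ 2)
       = (\<Sum>k\<in>A. a k ^ 2) * measure_pmf.expectation q (\<lambda>x. h x ^ 2)" .
qed

lemma integral_uniform_partition:
  fixes G :: "real \<Rightarrow> real"
  assumes G: "continuous_on {0..1} G" and N: "N > 0"
  shows "integral {0..1} G = (\<Sum>k<N. integral {real k / real N..real (Suc k) / real N} G)"
proof -
  have "integral {0..real m / real N} G
      = (\<Sum>k<m. integral {real k / real N..real (Suc k) / real N} G)" if "m \<le> N" for m
    using that
  proof (induction m)
    case (Suc m)
    have "real (Suc m) / real N \<le> 1" using Suc.prems by simp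
    then have "G integrable_on {0..real (Suc m) / real N}"
      by (intro integrable_continuous_interval continuous_on_subset[OF G]) auto
    moreover have "real m / real N \<le> real (Suc m) / real N"
      by (intro divide_right_mono) auto
    ultimately have "integral {0..real (Suc m) / real N} G
        = integral {0..real m / real N} G + integral {real m / real N..real (Suc m) / real N} G"
      by (intro Henstock_Kurzweil_Integration.integral_combine[symmetric]) auto
    with Suc show ?case by simp
  qed simp
  from this[of N] show ?thesis using N by simp
qed

lemma integral_left_endpoint_error:
  fixes G :: "real \<Rightarrow> real"
  assumes ab: "a \<le> b" and G: "continuous_on {a..b} G"
    and close: "\<And>t. t \<in> {a..b} \<Longrightarrow> \<bar>G t - G a\<bar> \<le> e"
  shows "\<bar>integral {a..b} G - (b - a) * G a\<bar> \<le> e * (b - a)"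
proof -
  have "norm (integral {a..b} (\<lambda>t. G t - G a)) \<le> e * (b - a)"
    using ab close by (intro integral_bound continuous_on_diff G) auto
  moreover have "integral {a..b} (\<lambda>t. G t - G a) = integral {a..b} G - (b - a) * G a"
    using ab G by (subst integral_diff) (auto intro: integrable_continuous_interval)
  ultimately show ?thesis by simp
qed

lemma tendsto_Riemann_sum:
  fixes G :: "real \<Rightarrow> real"
  assumes G: "continuous_on {0..1} G"
  shows "((\<lambda>N. (\<Sum>k<N. G (real k / real N)) / real N) \<longlongrightarrow> integral {0..1} G) sequentially"
proof (rule tendstoI)
  fix \<epsilon> :: real assume \<epsilon>: "\<epsilon> > 0"
  obtain d where d: "d > 0"
    and close: "\<And>x y. x \<in> {0..1} \<Longrightarrow> y \<in> {0..1} \<Longrightarrow> dist y x < d \<Longrightarrow> dist (G y) (G x) < \<epsilon> / 2"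
    using compact_uniformly_continuous[OF G compact_Icc] \<epsilon>
    unfolding uniformly_continuous_on_def by (metis half_gt_zero)
  obtain N0 :: nat where N0: "real N0 > 1 / d" using reals_Archimedean2 by blast
  show "eventually (\<lambda>N. dist ((\<Sum>k<N. G (real k / real N)) / real N) (integral {0..1} G) < \<epsilon>)
      sequentially"
    using eventually_gt_at_top[of N0]
  proof eventually_elim
    case (elim N)
    then have N: "N > 0" by simp
    have "1 / d < real N" using N0 elim by (meson of_nat_less_iff less_trans)
    then have Nd: "1 / real N < d" using d N by (simp add: field_simps)
    have cell: "\<bar>integral {real k / real N..real (Suc k) / real N} G - G (real k / real N) / real N\<bar>
                \<le> \<epsilon> / 2 / real N" if "k < N" for k
    proof -
      define a b where "a = real k / real N" and "b = real (Suc k) / real N"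
      have ab: "0 \<le> a" "a \<le> b" "b \<le> 1" "b - a = 1 / real N"
        unfolding a_def b_def using that N
        by (auto simp: divide_right_mono diff_divide_distrib[symmetric])
      have "\<bar>G t - G a\<bar> \<le> \<epsilon> / 2" if "t \<in> {a..b}" for t
        using close[of a t] that ab Nd by (auto simp: dist_real_def)
      then have "\<bar>integral {a..b} G - (b - a) * G a\<bar> \<le> \<epsilon> / 2 * (b - a)"
        using ab by (intro integral_left_endpoint_error continuous_on_subset[OF G]) auto
      then show ?thesis using ab by (simp add: a_def b_def)
    qed
    have "\<bar>(\<Sum>k<N. G (real k / real N)) / real N - integral {0..1} G\<bar>
        = \<bar>\<Sum>k<N. G (real k / real N) / real N
             - integral {real k / real N..real (Suc k) / real N} G\<bar>"
      by (simp add: integral_uniform_partition[OF G N] sum_divide_distrib sum_subtractf)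
    also have "\<dots> \<le> (\<Sum>k<N. \<epsilon> / 2 / real N)"
      by (rule order_trans[OF sum_abs sum_mono]) (use cell in \<open>auto simp: abs_minus_commute\<close>)
    also have "\<dots> < \<epsilon>" using N \<epsilon> by simp
    finally show ?case by (simp add: dist_real_def)
  qed
qed

lemma tendsto_Riemann_sum_omitting:
  fixes G :: "real \<Rightarrow> real" and E :: "nat \<Rightarrow> nat set"
  assumes G: "continuous_on {0..1} G" and E: "\<And>N. finite (E N)" "\<And>N. card (E N) \<le> K"
  shows "((\<lambda>N. (\<Sum>k\<in>{..<N} - E N. G (real k / real N)) / real N) \<longlongrightarrow> integral {0..1} G) sequentially"
proof -
  obtain B where B: "\<And>t. t \<in> {0..1} \<Longrightarrow> \<bar>G t\<bar> \<le> B"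
    using compact_imp_bounded[OF compact_continuous_image[OF G compact_Icc]]
    unfolding bounded_iff by fastforce
  have omitted: "\<bar>(\<Sum>k\<in>{..<N} \<inter> E N. G (real k / real N)) / real N\<bar> \<le> real K * B / real N" for N
  proof -
    have "\<bar>\<Sum>k\<in>{..<N} \<inter> E N. G (real k / real N)\<bar> \<le> (\<Sum>k\<in>{..<N} \<inter> E N. B)"
      by (rule order_trans[OF sum_abs sum_mono]) (auto intro!: B)
    also have "\<dots> = real (card ({..<N} \<inter> E N)) * B" by simp
    also have "\<dots> \<le> real K * B"
    proof (rule mult_right_mono)
      show "real (card ({..<N} \<inter> E N)) \<le> real K"
        using card_mono[OF E(1)[of N], of "{..<N} \<inter> E N"] E(2)[of N] by simp
      show "0 \<le> B" using B[of 0] by simp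
    qed
    finally show ?thesis by (simp add: divide_right_mono)
  qed
  have lim: "((\<lambda>N. real K * B / real N) \<longlongrightarrow> 0) sequentially"
    using tendsto_mult_right_zero[OF lim_inverse_n, of "real K * B"] by (simp add: divide_inverse)
  have "((\<lambda>N. (\<Sum>k\<in>{..<N} \<inter> E N. G (real k / real N)) / real N) \<longlongrightarrow> 0) sequentially"
    by (rule Lim_null_comparison[OF always_eventually lim]) (use omitted in simp)
  from tendsto_diff[OF tendsto_Riemann_sum[OF G] this] show ?thesis
    by (simp add: sum.Int_Diff[of "{..<N}" _ "E N" for N] diff_divide_distrib[symmetric])
qed

lemma filterlim_nat_floor_mult_at_top:
  fixes s :: "nat \<Rightarrow> real"
  assumes s: "filterlim s at_top sequentially" and e: "e > 0"
  shows "filterlim (\<lambda>N. nat \<lfloor>e * s N\<rfloor>) at_top sequentially"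
proof -
  have "filterlim (\<lambda>N. -1 + e * s N) at_top sequentially"
    by (intro filterlim_tendsto_add_at_top[OF tendsto_const]
        filterlim_tendsto_pos_mult_at_top[OF tendsto_const e s])
  then have "filterlim (\<lambda>N. real (nat \<lfloor>e * s N\<rfloor>)) at_top sequentially"
    by (rule filterlim_at_top_mono) (auto intro!: always_eventually, linarith)
  then show ?thesis
    by (simp add: filterlim_sequentially_iff_filterlim_real)
qed

lemma tendsto_nat_floor_mult_div:
  fixes s :: "nat \<Rightarrow> real"
  assumes s: "filterlim s at_top sequentially" and a: "a \<ge> 0"
  shows "((\<lambda>N. real (nat \<lfloor>a * s N\<rfloor>) / s N) \<longlongrightarrow> a) sequentially"
proof (rule tendsto_sandwich[OF _ _ _ tendsto_const])
  have "((\<lambda>N. a - inverse (s N)) \<longlongrightarrow> a - 0) sequentially"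
    by (intro tendsto_intros tendsto_inverse_0_at_top[OF s])
  then show "((\<lambda>N. a - inverse (s N)) \<longlongrightarrow> a) sequentially" by simp
  have pos: "eventually (\<lambda>N. s N > 0) sequentially"
    using s by (simp add: filterlim_at_top_dense)
  then show "eventually (\<lambda>N. real (nat \<lfloor>a * s N\<rfloor>) / s N \<le> a) sequentially"
    by eventually_elim (use a in \<open>simp add: divide_le_eq\<close>)
  from pos show "eventually (\<lambda>N. a - inverse (s N) \<le> real (nat \<lfloor>a * s N\<rfloor>) / s N) sequentially"
  proof eventually_elim
    case (elim N)
    have "(a * s N - 1) / s N \<le> real (nat \<lfloor>a * s N\<rfloor>) / s N"
      using elim by (intro divide_right_mono) linarith+
    then show ?case using elim by (simp add: field_simps)
  qed
qed

lemma sum_power2_div_le: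
  fixes f :: "nat \<Rightarrow> real"
  assumes B: "B \<subseteq> {..<N}" and f: "\<And>k. k \<in> B \<Longrightarrow> \<bar>f k\<bar> \<le> Bd"
  shows "(\<Sum>k\<in>B. (f k / real N) ^ 2) \<le> Bd ^ 2 / real N"
proof -
  have "(f k / real N) ^ 2 \<le> (Bd / real N) ^ 2" if "k \<in> B" for k
    using f[OF that] abs_le_square_iff[of "f k" Bd] by (simp add: power_divide divide_right_mono)
  then have "(\<Sum>k\<in>B. (f k / real N) ^ 2) \<le> real (card B) * (Bd / real N) ^ 2"
    using sum_mono[of B "\<lambda>k. (f k / real N) ^ 2" "\<lambda>_. (Bd / real N) ^ 2"] by simp
  also have "\<dots> \<le> real N * (Bd / real N) ^ 2"
    using card_mono[OF _ B] by (intro mult_right_mono) auto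
  also have "\<dots> \<le> Bd ^ 2 / real N" by (simp add: power2_eq_square)
  finally show ?thesis .
qed

lemma power_cross_le:
  fixes a b :: real
  assumes "0 \<le> a" "a \<le> b" "m \<le> n"
  shows "a ^ n * b ^ m \<le> b ^ n * a ^ m"
proof -
  have "a ^ n * b ^ m = a ^ m * (a ^ (n - m) * b ^ m)"
    using assms(3) by (simp add: power_add[symmetric] mult.assoc)
  also have "\<dots> \<le> a ^ m * (b ^ (n - m) * b ^ m)"
    using assms by (intro mult_left_mono mult_right_mono power_mono) auto
  also have "\<dots> = b ^ n * a ^ m"
    using assms(3) by (simp add: power_add[symmetric] mult.commute)
  finally show ?thesis .
qed

section \<open>The marginal laws\<close>

locale zero_range_rate =
  fixes g :: "nat \<Rightarrow> real" and gs \<alpha> :: real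
  assumes n_alpha_type: "n_alpha_type g gs \<alpha>"
begin

lemma g_pos: "n > 0 \<Longrightarrow> g n > 0"
  using n_alpha_type unfolding n_alpha_type_def by (metis less_eq_real_def not_less0)

lemma g_mono: "m \<le> n \<Longrightarrow> g m \<le> g n"
  using n_alpha_type unfolding n_alpha_type_def mono_def by blast

lemma alpha_pos: "\<alpha> > 0"
  using n_alpha_type by (simp add: n_alpha_type_def)

lemma g_asymp: "((\<lambda>n. g n / real n powr \<alpha>) \<longlongrightarrow> 1) sequentially"
  using n_alpha_type by (simp add: n_alpha_type_def)

lemma filterlim_g_at_top: "filterlim g at_top sequentially"
proof -
  have "filterlim (\<lambda>n. real n powr \<alpha>) at_top sequentially"
    using alpha_pos by (intro filterlim_compose[OF real_powr_at_top filterlim_real_sequentially])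
  then have "filterlim (\<lambda>n. g n / real n powr \<alpha> * real n powr \<alpha>) at_top sequentially"
    by (intro filterlim_tendsto_pos_mult_at_top[OF g_asymp]) simp_all
  moreover have "eventually (\<lambda>n. g n / real n powr \<alpha> * real n powr \<alpha> = g n) sequentially"
    using eventually_gt_at_top[of 0] by eventually_elim simp
  ultimately show ?thesis by (simp add: filterlim_cong)
qed

lemma gfact_pos: "gfact g n > 0"
  unfolding gfact_def by (intro prod_pos) (auto intro: g_pos)

lemma gfact_Suc: "gfact g (Suc n) = gfact g n * g (Suc n)"
  unfolding gfact_def by (simp add: prod.nat_ivl_Suc' mult.commute)

definition weight :: "real \<Rightarrow> nat \<Rightarrow> real" where
  "weight \<phi> n = \<phi> ^ n / gfact g n"

lemma weight_0 [simp]: "weight \<phi> 0 = 1"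
  by (simp add: weight_def gfact_def)

lemma weight_Suc: "weight \<phi> (Suc n) = weight \<phi> n * (\<phi> / g (Suc n))"
  unfolding weight_def gfact_Suc by simp

lemma weight_nonneg: "\<phi> \<ge> 0 \<Longrightarrow> weight \<phi> n \<ge> 0"
  unfolding weight_def using gfact_pos[of n] by simp

lemma summable_weight: "summable (weight \<phi>)"
proof -
  have "eventually (\<lambda>n. g n \<ge> 2 * \<bar>\<phi>\<bar> + 1) sequentially"
    using filterlim_g_at_top by (simp add: filterlim_at_top)
  then have "eventually (\<lambda>n. g (Suc n) \<ge> 2 * \<bar>\<phi>\<bar> + 1) sequentially"
    by (rule eventually_sequentially_Suc[THEN iffD2])
  then obtain N where N: "\<And>n. n \<ge> N \<Longrightarrow> g (Suc n) \<ge> 2 * \<bar>\<phi>\<bar> + 1"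
    by (auto simp: eventually_sequentially)
  have "norm (weight \<phi> (Suc n)) \<le> 1/2 * norm (weight \<phi> n)" if "n \<ge> N" for n
  proof -
    have "\<bar>\<phi>\<bar> / g (Suc n) \<le> 1/2"
      using N[OF that] by (simp add: field_simps)
    then have "norm (weight \<phi> n) * (\<bar>\<phi>\<bar> / g (Suc n)) \<le> norm (weight \<phi> n) * (1/2)"
      by (intro mult_left_mono) auto
    then show ?thesis
      using g_pos[of "Suc n"] by (simp add: weight_Suc abs_mult mult.commute)
  qed
  then show ?thesis by (intro summable_ratio_test[where c = "1/2" and N = N]) auto
qed

lemma summable_second_moment_weight:
  assumes "\<phi> \<ge> 0"
  shows "summable (\<lambda>n. real n ^ 2 * weight \<phi> n)"
proof (rule summable_comparison_test'[OF summable_weight[of "4 * \<phi>"]])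
  fix n :: nat
  have "real n \<le> 2 ^ n"
    using less_exp[of n] by (simp add: less_imp_le flip: of_nat_less_iff)
  then have "real n ^ 2 \<le> (2 ^ n) ^ 2"
    by (intro power_mono) auto
  also have "((2::real) ^ n) ^ 2 = (2 ^ 2) ^ n"
    by (simp only: power_mult[symmetric] mult.commute)
  also have "\<dots> = 4 ^ n" by simp
  finally have "real n ^ 2 * weight \<phi> n \<le> 4 ^ n * weight \<phi> n"
    by (intro mult_right_mono weight_nonneg assms)
  also have "\<dots> = weight (4 * \<phi>) n"
    by (simp add: weight_def power_mult_distrib)
  finally show "norm (real n ^ 2 * weight \<phi> n) \<le> weight (4 * \<phi>) n"
    using weight_nonneg[OF assms, of n] by simp
qed

lemma summable_first_moment_weight:
  assumes "\<phi> \<ge> 0"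
  shows "summable (\<lambda>n. real n * weight \<phi> n)"
proof (rule summable_comparison_test'[OF summable_second_moment_weight[OF assms]])
  fix n :: nat
  have "real n \<le> real n ^ 2" by (cases n) (auto simp: power2_eq_square)
  then show "norm (real n * weight \<phi> n) \<le> real n ^ 2 * weight \<phi> n"
    using weight_nonneg[OF assms, of n] by (simp add: mult_right_mono)
qed

lemma weight_sums: "weight \<phi> sums Zpart g \<phi>"
  unfolding Zpart_def weight_def[symmetric] by (rule summable_sums[OF summable_weight])

lemma Zpart_eq_suminf: "Zpart g \<phi> = (\<Sum>n. weight \<phi> n)"
  using sums_unique[OF weight_sums] by simp

lemma Zpart_ge_1: "\<phi> \<ge> 0 \<Longrightarrow> Zpart g \<phi> \<ge> 1"
  using sum_le_suminf[OF summable_weight, of "{0}" \<phi>] weight_nonneg[of \<phi>]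
  by (auto simp: Zpart_eq_suminf)

lemma Pgc_eq: "Pgc g \<phi> n = weight \<phi> n / Zpart g \<phi>"
  unfolding Pgc_def weight_def by simp

lemma pmf_Ppmf:
  assumes "\<phi> \<ge> 0"
  shows "pmf (Ppmf g \<phi>) n = Pgc g \<phi> n"
proof -
  have nonneg: "Pgc g \<phi> n \<ge> 0" for n
    unfolding Pgc_eq using weight_nonneg[OF assms, of n] Zpart_ge_1[OF assms] by simp
  have "Pgc g \<phi> sums 1"
    unfolding Pgc_eq using sums_divide[OF weight_sums[of \<phi>], of "Zpart g \<phi>"] Zpart_ge_1[OF assms]
    by simp
  then have "(\<integral>\<^sup>+n. ennreal (Pgc g \<phi> n) \<partial>count_space UNIV) = 1"
    using nonneg by (simp add: nn_integral_count_space_nat suminf_ennreal_eq sums_unique[symmetric])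
  then show ?thesis
    unfolding Ppmf_def by (subst pmf_embed_pmf) (use nonneg in auto)
qed

lemma Pgc_le_1: "\<phi> \<ge> 0 \<Longrightarrow> Pgc g \<phi> n \<le> 1"
  using pmf_le_1[of "Ppmf g \<phi>" n] by (simp add: pmf_Ppmf)

lemma Ppmf_moments:
  assumes "\<phi> \<ge> 0"
  shows "integrable (measure_pmf (Ppmf g \<phi>)) real"
    and "integrable (measure_pmf (Ppmf g \<phi>)) (\<lambda>n. real n ^ 2)"
    and "measure_pmf.expectation (Ppmf g \<phi>) real = Rmean g \<phi>"
proof -
  have pmf: "(\<lambda>n. pmf (Ppmf g \<phi>) n * h n) = (\<lambda>n. h n * weight \<phi> n / Zpart g \<phi>)"
    for h :: "nat \<Rightarrow> real"
    by (simp add: fun_eq_iff pmf_Ppmf[OF assms] Pgc_eq)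
  have "summable (\<lambda>n. pmf (Ppmf g \<phi>) n * \<bar>real n\<bar>)"
    using summable_divide[OF summable_first_moment_weight[OF assms]] by (simp add: pmf)
  from pmf_nat_expectation_sums[OF this]
  show "integrable (measure_pmf (Ppmf g \<phi>)) real"
    and "measure_pmf.expectation (Ppmf g \<phi>) real = Rmean g \<phi>"
    by (auto simp: Rmean_def pmf_Ppmf[OF assms] sums_iff mult.commute)
  have "summable (\<lambda>n. pmf (Ppmf g \<phi>) n * \<bar>real n ^ 2\<bar>)"
    using summable_divide[OF summable_second_moment_weight[OF assms]] by (simp add: pmf)
  from pmf_nat_expectation_sums(1)[OF this]
  show "integrable (measure_pmf (Ppmf g \<phi>)) (\<lambda>n. real n ^ 2)" .
qed

lemma Ppmf_prob_sums:
  assumes "\<phi> \<ge> 0"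
  shows "(\<lambda>n. Pgc g \<phi> n * indicator A n) sums measure_pmf.prob (Ppmf g \<phi>) A"
proof -
  have "summable (\<lambda>n. pmf (Ppmf g \<phi>) n * \<bar>indicator A n :: real\<bar>)"
  proof (rule summable_comparison_test'[where g = "pmf (Ppmf g \<phi>)"])
    show "summable (pmf (Ppmf g \<phi>))"
      using pmf_abs_summable[of "Ppmf g \<phi>" UNIV] by (simp add: abs_summable_on_nat_iff')
  qed (auto simp: indicator_def)
  from pmf_nat_expectation_sums(2)[OF this] show ?thesis
    by (simp add: pmf_Ppmf[OF assms])
qed

lemma weight_upper_decay:
  assumes "\<phi> \<ge> 0" "\<rho> > 0" "\<phi> \<le> \<rho> * g (Suc m)"
  shows "weight \<phi> (m + i) \<le> \<rho> ^ i * weight \<phi> m"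
proof (induction i)
  case (Suc i)
  have "g (Suc m) \<le> g (Suc (m + i))" by (rule g_mono) simp
  then have "\<phi> \<le> \<rho> * g (Suc (m + i))"
    using assms(2,3) by (meson order_trans less_imp_le mult_left_mono)
  then have "\<phi> / g (Suc (m + i)) \<le> \<rho>"
    using g_pos[of "Suc (m + i)"] by (simp add: divide_le_eq)
  then have "weight \<phi> (m + i) * (\<phi> / g (Suc (m + i))) \<le> weight \<phi> (m + i) * \<rho>"
    by (rule mult_left_mono) (rule weight_nonneg[OF assms(1)])
  then have "weight \<phi> (m + Suc i) \<le> weight \<phi> (m + i) * \<rho>"
    by (simp add: weight_Suc)
  also have "\<dots> \<le> \<rho> ^ i * weight \<phi> m * \<rho>"
    using Suc assms(2) by (intro mult_right_mono) auto
  finally show ?case by (simp add: mult_ac)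
qed simp

lemma Ppmf_upper_tail:
  assumes "\<phi> \<ge> 0" "0 < \<rho>" "\<rho> < 1" "\<phi> \<le> \<rho> * g (Suc m)"
  shows "measure_pmf.prob (Ppmf g \<phi>) {n. m + k \<le> n} \<le> \<rho> ^ k / (1 - \<rho>)"
proof -
  define b where "b n = (if m + k \<le> n then \<rho> ^ (n - m) else 0)" for n
  have "(\<lambda>i. b (i + (m + k))) = (\<lambda>i. \<rho> ^ k * \<rho> ^ i)"
    by (auto simp: b_def fun_eq_iff power_add)
  moreover have "(\<lambda>i. \<rho> ^ k * \<rho> ^ i) sums (\<rho> ^ k * (1 / (1 - \<rho>)))"
    by (intro sums_mult geometric_sums) (use assms in auto)
  ultimately have "(\<lambda>i. b (i + (m + k))) sums (\<rho> ^ k / (1 - \<rho>))" by simp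
  moreover have "(\<Sum>i<m + k. b i) = 0" by (auto simp: b_def)
  ultimately have b: "b sums (\<rho> ^ k / (1 - \<rho>))" by (simp add: sums_iff_shift)
  have "Pgc g \<phi> n * indicator {n. m + k \<le> n} n \<le> b n" for n
  proof (cases "m + k \<le> n")
    case True
    then obtain i where n: "n = m + i" by (metis le_add1 le_iff_add le_trans)
    have "Pgc g \<phi> n \<le> \<rho> ^ i * weight \<phi> m / Zpart g \<phi>"
      unfolding Pgc_eq n using weight_upper_decay[OF assms(1,2,4)] Zpart_ge_1[OF assms(1)]
      by (intro divide_right_mono) auto
    also have "\<dots> = \<rho> ^ i * Pgc g \<phi> m" by (simp add: Pgc_eq)
    also have "\<dots> \<le> \<rho> ^ i" using Pgc_le_1[OF assms(1), of m] assms(2)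
      by (simp add: mult_left_le)
    finally show ?thesis using True by (simp add: b_def n)
  qed (auto simp: b_def)
  then show ?thesis by (rule sums_le[OF _ Ppmf_prob_sums[OF assms(1)] b])
qed

lemma weight_lower_decay:
  assumes "\<phi> > 0" "\<rho> > 0" "g m \<le> \<rho> * \<phi>" "j \<le> m"
  shows "weight \<phi> (m - j) \<le> \<rho> ^ j * weight \<phi> m"
  using assms(4)
proof (induction j)
  case (Suc j)
  define i where "i = m - Suc j"
  have si: "Suc i = m - j" using Suc.prems unfolding i_def by simp
  have "g (Suc i) \<le> \<rho> * \<phi>" using assms(3) g_mono[of "Suc i" m] si by simp
  then have "g (Suc i) / \<phi> \<le> \<rho>" using assms(1) by (simp add: divide_le_eq)
  moreover have "weight \<phi> i = weight \<phi> (Suc i) * (g (Suc i) / \<phi>)"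
    using g_pos[of "Suc i"] assms(1) by (simp add: weight_Suc field_simps)
  ultimately have "weight \<phi> i \<le> weight \<phi> (Suc i) * \<rho>"
    using mult_left_mono[OF _ weight_nonneg, of "g (Suc i) / \<phi>" \<rho> \<phi> "Suc i"] assms(1) by simp
  also have "\<dots> \<le> \<rho> ^ j * weight \<phi> m * \<rho>"
    using Suc assms(2) si by (intro mult_right_mono) auto
  finally show ?case by (simp add: i_def mult_ac)
qed simp

lemma Ppmf_lower_tail:
  assumes "\<phi> > 0" "0 < \<rho>" "\<rho> < 1" "g m \<le> \<rho> * \<phi>"
  shows "measure_pmf.prob (Ppmf g \<phi>) {n. n + k \<le> m} \<le> \<rho> ^ k / (1 - \<rho>)"
proof (cases "k \<le> m")
  case False
  then have "{n. n + k \<le> m} = {}" by auto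
  then show ?thesis using assms by simp
next
  case True
  define M where "M = m - k"
  have "measure_pmf.prob (Ppmf g \<phi>) {n. n + k \<le> m} = (\<Sum>n<Suc M. Pgc g \<phi> n)"
  proof -
    have "{n. n + k \<le> m} = {..<Suc M}" unfolding M_def using True by auto
    then show ?thesis using assms(1) by (simp add: measure_measure_pmf_finite pmf_Ppmf)
  qed
  also have "\<dots> \<le> (\<Sum>n<Suc M. \<rho> ^ k * \<rho> ^ (Suc M - Suc n))"
  proof (intro sum_mono)
    fix n assume "n \<in> {..<Suc M}"
    then have n: "n \<le> M" by simp
    have "Pgc g \<phi> n \<le> \<rho> ^ (m - n) * weight \<phi> m / Zpart g \<phi>"
      using weight_lower_decay[OF assms(1,2,4), of "m - n"] Zpart_ge_1[of \<phi>] assms(1) n True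
      by (simp add: Pgc_eq M_def divide_right_mono)
    also have "\<dots> = \<rho> ^ (m - n) * Pgc g \<phi> m" by (simp add: Pgc_eq)
    also have "\<dots> \<le> \<rho> ^ (m - n)" using Pgc_le_1[of \<phi> m] assms by (simp add: mult_left_le)
    also have "m - n = k + (Suc M - Suc n)" using n True unfolding M_def by simp
    finally show "Pgc g \<phi> n \<le> \<rho> ^ k * \<rho> ^ (Suc M - Suc n)" by (simp add: power_add)
  qed
  also have "\<dots> = \<rho> ^ k * (\<Sum>n<Suc M. \<rho> ^ n)"
    by (simp only: sum_distrib_left[symmetric] sum.nat_diff_reindex)
  also have "(\<Sum>n<Suc M. \<rho> ^ n) = (1 - \<rho> ^ Suc M) / (1 - \<rho>)"
    using assms by (subst sum_gp_strict) simp
  also have "\<dots> \<le> 1 / (1 - \<rho>)" using assms by (intro divide_right_mono) auto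
  finally show ?thesis using assms by (simp add: mult_left_mono)
qed

lemma Ppmf_prob_ratio_above:
  assumes \<phi>: "\<phi> \<ge> 0" and \<rho>: "0 < \<rho>" "\<rho> < 1" and s: "s > 0" and ab: "0 \<le> a" "a \<le> b"
    and rate: "\<phi> \<le> \<rho> * g (nat \<lfloor>a * s\<rfloor>)"
  shows "measure_pmf.prob (Ppmf g \<phi>) {n. real n / s > b} \<le> \<rho> ^ nat \<lfloor>(b - a) * s\<rfloor> / (1 - \<rho>)"
proof -
  define m k where "m = nat \<lfloor>a * s\<rfloor>" and "k = nat \<lfloor>(b - a) * s\<rfloor>"
  have "g m \<le> g (Suc m)" by (rule g_mono) simp
  then have "\<phi> \<le> \<rho> * g (Suc m)"
    using rate \<rho>(1) unfolding m_def by (meson order_trans less_imp_le mult_left_mono)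
  then have tail: "measure_pmf.prob (Ppmf g \<phi>) {n. m + k \<le> n} \<le> \<rho> ^ k / (1 - \<rho>)"
    by (rule Ppmf_upper_tail[OF \<phi> \<rho>])
  have "real m \<le> a * s" "real k \<le> (b - a) * s"
    unfolding m_def k_def using ab s by simp_all
  then have "real (m + k) \<le> b * s" by (simp add: algebra_simps)
  then have "m + k \<le> n" if "real n / s > b" for n
    using that s by (simp add: pos_less_divide_eq)
  then have "{n. real n / s > b} \<subseteq> {n. m + k \<le> n}" by auto
  then show ?thesis
    unfolding k_def[symmetric] by (intro order_trans[OF measure_pmf.finite_measure_mono tail]) auto
qed

lemma Ppmf_prob_ratio_below:
  assumes \<phi>: "\<phi> > 0" and \<rho>: "0 < \<rho>" "\<rho> < 1" and s: "s > 0" and ab: "0 \<le> b" "b \<le> a"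
    and rate: "g (nat \<lfloor>a * s\<rfloor>) \<le> \<rho> * \<phi>"
  shows "measure_pmf.prob (Ppmf g \<phi>) {n. real n / s < b} \<le> \<rho> ^ nat \<lfloor>(a - b) * s\<rfloor> / (1 - \<rho>)"
proof -
  define m k where "m = nat \<lfloor>a * s\<rfloor>" and "k = nat \<lfloor>(a - b) * s\<rfloor>"
  have tail: "measure_pmf.prob (Ppmf g \<phi>) {n. n + k \<le> m} \<le> \<rho> ^ k / (1 - \<rho>)"
    using rate unfolding m_def by (rule Ppmf_lower_tail[OF \<phi> \<rho>])
  have "n + k \<le> m" if "real n / s < b" for n
  proof -
    have "real k \<le> (a - b) * s" unfolding k_def using ab s by simp
    then have "real (n + k) < a * s" using that s by (simp add: field_simps)
    then show ?thesis unfolding m_def by linarith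
  qed
  then have "{n. real n / s < b} \<subseteq> {n. n + k \<le> m}" by auto
  then show ?thesis
    unfolding k_def[symmetric] by (intro order_trans[OF measure_pmf.finite_measure_mono tail]) auto
qed

section \<open>The mean and its inverse\<close>

definition first_moment :: "real \<Rightarrow> real" where
  "first_moment \<phi> = (\<Sum>n. real n * weight \<phi> n)"

lemma Rmean_eq: "\<phi> \<ge> 0 \<Longrightarrow> Rmean g \<phi> = first_moment \<phi> / Zpart g \<phi>"
  unfolding Rmean_def first_moment_def Pgc_eq
  using suminf_divide[OF summable_first_moment_weight, of \<phi> "Zpart g \<phi>"] by simp

text \<open>
  Symmetrising the double sum gives \<open>2 D = \<Sum>\<^sub>n \<Sum>\<^sub>m (n - m) (w\<^sub>b(n) w\<^sub>a(m) - w\<^sub>a(n) w\<^sub>b(m))\<close>,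
  whose terms are all nonnegative; the terms with \<open>{n, m} = {0, 1}\<close> alone give the bound.
\<close>
lemma weight_cross_sum_ge:
  assumes "0 \<le> a" "a \<le> b" "M \<ge> 2"
  shows "(\<Sum>n<M. real n * weight b n) * (\<Sum>m<M. weight a m)
         - (\<Sum>n<M. real n * weight a n) * (\<Sum>m<M. weight b m) \<ge> (b - a) / g 1"
proof -
  define F where "F n m = weight b n * weight a m - weight a n * weight b m" for n m
  define D where "D = (\<Sum>n<M. real n * weight b n) * (\<Sum>m<M. weight a m)
                     - (\<Sum>n<M. real n * weight a n) * (\<Sum>m<M. weight b m)"
  define T where "T n m = (real n - real m) * F n m" for n m
  have D1: "D = (\<Sum>n<M. \<Sum>m<M. real n * F n m)"
    unfolding D_def F_def sum_product by (simp add: sum_subtractf[symmetric] algebra_simps)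
  have "D = (\<Sum>m<M. \<Sum>n<M. real m * F m n)" unfolding D1 ..
  also have "\<dots> = (\<Sum>n<M. \<Sum>m<M. real m * F m n)" by (rule sum.swap)
  also have "\<dots> = (\<Sum>n<M. \<Sum>m<M. - (real m * F n m))" by (simp add: F_def algebra_simps)
  finally have "2 * D = (\<Sum>n<M. \<Sum>m<M. T n m)"
    unfolding T_def mult_2 by (subst (1) D1) (simp add: sum.distrib[symmetric] algebra_simps)
  have T_nonneg: "T n m \<ge> 0" for n m
  proof (cases "m \<le> n")
    case True
    then have "a ^ n * b ^ m \<le> b ^ n * a ^ m" by (intro power_cross_le) (use assms in auto)
    then have "F n m \<ge> 0"
      unfolding F_def weight_def using gfact_pos[of n] gfact_pos[of m] by (simp add: field_simps)
    then show ?thesis unfolding T_def using True by simp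
  next
    case False
    then have "a ^ m * b ^ n \<le> b ^ m * a ^ n" by (intro power_cross_le) (use assms in auto)
    then have "F n m \<le> 0"
      unfolding F_def weight_def using gfact_pos[of n] gfact_pos[of m] by (simp add: field_simps)
    then show ?thesis unfolding T_def using False by (simp add: mult_nonpos_nonpos)
  qed
  have "(\<Sum>n<M. \<Sum>m<M. T n m) \<ge> (\<Sum>n\<in>{0, 1}. \<Sum>m<M. T n m)"
    using assms by (intro sum_mono2) (auto intro: sum_nonneg T_nonneg)
  moreover have "(\<Sum>n\<in>{0, 1}. \<Sum>m<M. T n m) = (\<Sum>m<M. T 0 m) + (\<Sum>m<M. T 1 m)" by simp
  moreover have "(\<Sum>m<M. T 0 m) \<ge> T 0 1" "(\<Sum>m<M. T 1 m) \<ge> T 1 0"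
    using assms by (auto intro!: member_le_sum T_nonneg)
  moreover have "T 0 1 + T 1 0 = 2 * ((b - a) / g 1)"
    unfolding T_def F_def weight_def using gfact_Suc[of 0] g_pos[of 1]
    by (simp add: gfact_def diff_divide_distrib)
  ultimately have "D \<ge> (b - a) / g 1" using \<open>2 * D = _\<close> by linarith
  then show ?thesis unfolding D_def .
qed

lemma Rmean_strict_mono:
  assumes "0 \<le> a" "a < b"
  shows "Rmean g a < Rmean g b"
proof -
  let ?D = "\<lambda>M. (\<Sum>n<M. real n * weight b n) * (\<Sum>m<M. weight a m)
                  - (\<Sum>n<M. real n * weight a n) * (\<Sum>m<M. weight b m)"
  have "?D \<longlonglongrightarrow> first_moment b * Zpart g a - first_moment a * Zpart g b"
    unfolding first_moment_def Zpart_eq_suminf using assms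
    by (intro tendsto_intros summable_LIMSEQ summable_first_moment_weight summable_weight) auto
  moreover have "eventually (\<lambda>M. (b - a) / g 1 \<le> ?D M) sequentially"
    using eventually_ge_at_top[of 2]
    by eventually_elim (rule weight_cross_sum_ge, use assms in auto)
  ultimately have "first_moment b * Zpart g a - first_moment a * Zpart g b \<ge> (b - a) / g 1"
    by (rule tendsto_lowerbound) simp
  moreover have "(b - a) / g 1 > 0" using assms g_pos[of 1] by simp
  ultimately have "first_moment a * Zpart g b < first_moment b * Zpart g a" by linarith
  then show ?thesis
    using Zpart_ge_1[of a] Zpart_ge_1[of b] assms by (simp add: Rmean_eq divide_simps mult.commute)
qed

lemma Rmean_0: "Rmean g 0 = 0"
proof -
  have "(\<lambda>n. real n * Pgc g 0 n) = (\<lambda>_. 0)"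
    by (auto simp: Pgc_def fun_eq_iff)
  then show ?thesis unfolding Rmean_def by simp
qed

lemma isCont_Zpart: "isCont (Zpart g) \<phi>"
proof -
  have eq: "Zpart g = (\<lambda>x. \<Sum>n. inverse (gfact g n) * x ^ n)"
    by (auto simp: fun_eq_iff Zpart_def field_simps)
  have "summable (\<lambda>n. inverse (gfact g n) * (\<bar>\<phi>\<bar> + 1) ^ n)"
    using summable_weight[of "\<bar>\<phi>\<bar> + 1", unfolded weight_def[abs_def]]
    by (simp add: divide_inverse mult.commute)
  then show ?thesis unfolding eq by (rule isCont_powser) simp
qed

lemma isCont_first_moment: "isCont first_moment \<phi>"
proof -
  have eq: "first_moment = (\<lambda>x. \<Sum>n. (real n / gfact g n) * x ^ n)"
    by (auto simp: fun_eq_iff first_moment_def weight_def)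
  have "summable (\<lambda>n. (real n / gfact g n) * (\<bar>\<phi>\<bar> + 1) ^ n)"
    using summable_first_moment_weight[of "\<bar>\<phi>\<bar> + 1", unfolded weight_def] by simp
  then show ?thesis unfolding eq by (rule isCont_powser) simp
qed

text \<open>
  If \<open>\<phi> = 3 g(m)\<close>, the lower tail bound puts mass at least \<open>1/2\<close> on \<open>[m, \<infinity>)\<close>,
  so the mean is at least \<open>m/2\<close>.
\<close>
lemma Rmean_unbounded:
  assumes "c \<ge> 0"
  obtains \<phi> where "\<phi> \<ge> 0" "Rmean g \<phi> \<ge> c"
proof -
  define m where "m = nat \<lceil>2 * c\<rceil> + 1"
  define \<phi> where "\<phi> = 3 * g m"
  have m: "m > 0" "real m \<ge> 2 * c" unfolding m_def by linarith+
  have \<phi>: "\<phi> > 0" unfolding \<phi>_def using g_pos[OF m(1)] by simp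
  have "measure_pmf.prob (Ppmf g \<phi>) {n. n + 1 \<le> m} \<le> (1/3) ^ 1 / (1 - 1/3)"
    by (rule Ppmf_lower_tail[OF \<phi>]) (simp_all add: \<phi>_def)
  moreover have "{n. real m \<le> real n} = space (Ppmf g \<phi>) - {n. n + 1 \<le> m}" by auto
  ultimately have "1/2 \<le> measure_pmf.prob (Ppmf g \<phi>) {n. real m \<le> real n}"
    using measure_pmf.prob_compl[of "{n. n + 1 \<le> m}" "Ppmf g \<phi>"] by simp
  also have "\<dots> \<le> measure_pmf.expectation (Ppmf g \<phi>) real / real m"
    using Ppmf_moments(1)[of \<phi>] \<phi> m
    by (intro order_trans[OF _ integral_Markov_inequality_measure[where A = "{}"]]) auto
  finally have "Rmean g \<phi> \<ge> c"
    using Ppmf_moments(3)[of \<phi>] \<phi> m by (simp add: field_simps)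
  with \<phi> show ?thesis by (intro that) auto
qed

lemma Rmean_Phi:
  assumes "c \<ge> 0"
  shows "Phi g c \<ge> 0" and "Rmean g (Phi g c) = c"
proof -
  obtain \<phi>1 where \<phi>1: "\<phi>1 \<ge> 0" "Rmean g \<phi>1 \<ge> c" using Rmean_unbounded[OF assms] by blast
  have "\<exists>\<phi>. 0 \<le> \<phi> \<and> \<phi> \<le> \<phi>1 \<and> first_moment \<phi> / Zpart g \<phi> = c"
  proof (rule IVT)
    show "first_moment 0 / Zpart g 0 \<le> c" by (metis Rmean_0 Rmean_eq assms order_refl)
    show "c \<le> first_moment \<phi>1 / Zpart g \<phi>1" using \<phi>1 Rmean_eq[of \<phi>1] by simp
    show "\<forall>\<phi>. 0 \<le> \<phi> \<and> \<phi> \<le> \<phi>1 \<longrightarrow> isCont (\<lambda>\<phi>. first_moment \<phi> / Zpart g \<phi>) \<phi>"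
      using Zpart_ge_1 by (auto intro!: isCont_divide isCont_first_moment isCont_Zpart
          simp: less_le_trans[OF zero_less_one, THEN less_imp_neq, THEN not_sym])
  qed (use \<phi>1 in simp)
  then obtain \<phi> where \<phi>: "\<phi> \<ge> 0" "Rmean g \<phi> = c"
    using Rmean_eq by force
  have "Phi g c = \<phi>"
    unfolding Phi_def
  proof (rule the_equality)
    fix \<phi>' assume \<phi>': "0 \<le> \<phi>' \<and> Rmean g \<phi>' = c"
    show "\<phi>' = \<phi>"
    proof (rule ccontr)
      assume "\<phi>' \<noteq> \<phi>"
      then consider "\<phi>' < \<phi>" | "\<phi> < \<phi>'" by linarith
      then show False
        using Rmean_strict_mono[of \<phi>' \<phi>] Rmean_strict_mono[of \<phi> \<phi>'] \<phi> \<phi>' by cases auto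
    qed
  qed (use \<phi> in simp)
  with \<phi> show "Phi g c \<ge> 0" "Rmean g (Phi g c) = c" by auto
qed

section \<open>Concentration of the marginals\<close>

lemma g_floor_asymp:
  fixes s :: "nat \<Rightarrow> real"
  assumes s: "filterlim s at_top sequentially" and a: "a > 0"
  shows "((\<lambda>N. g (nat \<lfloor>a * s N\<rfloor>) / s N powr \<alpha>) \<longlongrightarrow> a powr \<alpha>) sequentially"
proof -
  define n where "n N = nat \<lfloor>a * s N\<rfloor>" for N
  have "((\<lambda>N. g (n N) / real (n N) powr \<alpha> * (real (n N) / s N) powr \<alpha>) \<longlongrightarrow> 1 * a powr \<alpha>) sequentially"
    using a unfolding n_def
    by (intro tendsto_mult tendsto_powr filterlim_compose[OF g_asymp]
        filterlim_nat_floor_mult_at_top[OF s a] tendsto_nat_floor_mult_div[OF s]) auto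
  moreover have "eventually (\<lambda>N. s N > 1 / a) sequentially"
    using s by (simp add: filterlim_at_top_dense)
  then have "eventually (\<lambda>N. g (n N) / real (n N) powr \<alpha> * (real (n N) / s N) powr \<alpha>
                            = g (n N) / s N powr \<alpha>) sequentially"
  proof eventually_elim
    case (elim N)
    then have "s N > 0" "n N > 0" using a by (auto simp: n_def field_simps less_trans[OF _ elim])
    then show ?case by (simp add: powr_divide)
  qed
  ultimately show ?thesis unfolding n_def by (simp add: tendsto_cong)
qed

text \<open>
  When \<open>\<phi>\<^sub>N / s\<^sub>N\<^sup>\<alpha>\<close> stays below \<open>a\<^sup>\<alpha>\<close>, the rate \<open>g(\<lfloor>a s\<^sub>N\<rfloor>) \<sim> (a s\<^sub>N)\<^sup>\<alpha>\<close> exceeds \<open>\<phi>\<^sub>N\<close>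
  by a fixed factor, so beyond \<open>a s\<^sub>N\<close> the weights decay geometrically; symmetrically below.
\<close>
lemma tendsto_Ppmf_above:
  fixes s \<phi> :: "nat \<Rightarrow> real"
  assumes s: "filterlim s at_top sequentially" and ab: "0 < a" "a < b" and \<phi>: "\<And>N. \<phi> N \<ge> 0"
    and lim: "((\<lambda>N. \<phi> N / s N powr \<alpha>) \<longlongrightarrow> L) sequentially" and L: "L < a powr \<alpha>"
  shows "((\<lambda>N. measure_pmf.prob (Ppmf g (\<phi> N)) {n. real n / s N > b}) \<longlongrightarrow> 0) sequentially"
proof -
  define r where "r = L / a powr \<alpha>"
  define \<rho> where "\<rho> = (1 + max 0 r) / 2"
  have "r < 1" unfolding r_def using L ab(1) by (simp add: divide_less_eq)
  then have \<rho>: "0 < \<rho>" "\<rho> < 1" "r < \<rho>" unfolding \<rho>_def by auto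
  have "((\<lambda>N. (\<phi> N / s N powr \<alpha>) / (g (nat \<lfloor>a * s N\<rfloor>) / s N powr \<alpha>)) \<longlongrightarrow> r) sequentially"
    unfolding r_def using ab by (intro tendsto_divide lim g_floor_asymp[OF s]) auto
  then have "eventually (\<lambda>N. (\<phi> N / s N powr \<alpha>) / (g (nat \<lfloor>a * s N\<rfloor>) / s N powr \<alpha>) < \<rho>)
      sequentially"
    using \<rho>(3) by (rule order_tendstoD)
  moreover have "eventually (\<lambda>N. s N > 1 / a) sequentially"
    using s by (simp add: filterlim_at_top_dense)
  ultimately have "eventually (\<lambda>N. measure_pmf.prob (Ppmf g (\<phi> N)) {n. real n / s N > b}
                              \<le> \<rho> ^ nat \<lfloor>(b - a) * s N\<rfloor> / (1 - \<rho>)) sequentially"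
  proof eventually_elim
    case (elim N)
    then have "s N > 0" "nat \<lfloor>a * s N\<rfloor> > 0"
      using ab by (auto simp: field_simps less_trans[OF _ elim(2)])
    with elim g_pos show ?case
      using ab by (intro Ppmf_prob_ratio_above[OF \<phi> \<rho>(1,2)]) (auto simp: divide_less_eq less_imp_le)
  qed
  moreover have "filterlim (\<lambda>N. nat \<lfloor>(b - a) * s N\<rfloor>) at_top sequentially"
    using ab by (intro filterlim_nat_floor_mult_at_top[OF s]) simp
  then have "((\<lambda>N. \<rho> ^ nat \<lfloor>(b - a) * s N\<rfloor> / (1 - \<rho>)) \<longlongrightarrow> 0) sequentially"
    using \<rho> by (intro tendsto_divide_zero filterlim_compose[OF LIMSEQ_power_zero]) auto
  ultimately show ?thesis by (intro measure_pmf_prob_tendsto_0I)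
qed

lemma tendsto_Ppmf_below:
  fixes s \<phi> :: "nat \<Rightarrow> real"
  assumes s: "filterlim s at_top sequentially" and ab: "0 < b" "b < a"
    and lim: "((\<lambda>N. \<phi> N / s N powr \<alpha>) \<longlongrightarrow> L) sequentially" and L: "a powr \<alpha> < L"
  shows "((\<lambda>N. measure_pmf.prob (Ppmf g (\<phi> N)) {n. real n / s N < b}) \<longlongrightarrow> 0) sequentially"
proof -
  define r where "r = a powr \<alpha> / L"
  define \<rho> where "\<rho> = (1 + max 0 r) / 2"
  have "L > 0" using L ab by (smt (verit) powr_gt_zero)
  then have "r < 1" unfolding r_def using L by (simp add: divide_less_eq)
  then have \<rho>: "0 < \<rho>" "\<rho> < 1" "r < \<rho>" unfolding \<rho>_def by auto
  have "((\<lambda>N. (g (nat \<lfloor>a * s N\<rfloor>) / s N powr \<alpha>) / (\<phi> N / s N powr \<alpha>)) \<longlongrightarrow> r) sequentially"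
    unfolding r_def using ab \<open>L > 0\<close> by (intro tendsto_divide lim g_floor_asymp[OF s]) auto
  then have "eventually (\<lambda>N. (g (nat \<lfloor>a * s N\<rfloor>) / s N powr \<alpha>) / (\<phi> N / s N powr \<alpha>) < \<rho>)
      sequentially"
    using \<rho>(3) by (rule order_tendstoD)
  moreover have "eventually (\<lambda>N. \<phi> N / s N powr \<alpha> > 0) sequentially"
    using lim \<open>L > 0\<close> by (rule order_tendstoD)
  moreover have "eventually (\<lambda>N. s N > 0) sequentially"
    using s by (simp add: filterlim_at_top_dense)
  ultimately have "eventually (\<lambda>N. measure_pmf.prob (Ppmf g (\<phi> N)) {n. real n / s N < b}
                              \<le> \<rho> ^ nat \<lfloor>(a - b) * s N\<rfloor> / (1 - \<rho>)) sequentially"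
  proof eventually_elim
    case (elim N)
    then have "\<phi> N > 0" by (simp add: zero_less_divide_iff)
    with elim show ?case
      using ab by (intro Ppmf_prob_ratio_below[OF _ \<rho>(1,2)]) (auto simp: divide_less_eq less_imp_le)
  qed
  moreover have "filterlim (\<lambda>N. nat \<lfloor>(a - b) * s N\<rfloor>) at_top sequentially"
    using ab by (intro filterlim_nat_floor_mult_at_top[OF s]) simp
  then have "((\<lambda>N. \<rho> ^ nat \<lfloor>(a - b) * s N\<rfloor> / (1 - \<rho>)) \<longlongrightarrow> 0) sequentially"
    using \<rho> by (intro tendsto_divide_zero filterlim_compose[OF LIMSEQ_power_zero]) auto
  ultimately show ?thesis by (intro measure_pmf_prob_tendsto_0I)
qed

lemma conv_prob_Ppmf_scaled:
  fixes s \<phi> :: "nat \<Rightarrow> real"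
  assumes s: "filterlim s at_top sequentially" and \<phi>: "\<And>N. \<phi> N \<ge> 0" and A: "A \<ge> 0"
    and lim: "((\<lambda>N. \<phi> N / s N powr \<alpha>) \<longlongrightarrow> A powr \<alpha>) sequentially"
  shows "conv_prob (\<lambda>N. Ppmf g (\<phi> N)) (\<lambda>N n. real n / s N) A"
proof (rule conv_probI_one_sided)
  fix b assume "A < b"
  then have "0 < (A + b) / 2" "(A + b) / 2 < b" "A powr \<alpha> < ((A + b) / 2) powr \<alpha>"
    using A alpha_pos by (auto intro: powr_less_mono2)
  then show "((\<lambda>N. measure_pmf.prob (Ppmf g (\<phi> N)) {n. real n / s N > b}) \<longlongrightarrow> 0) sequentially"
    by (intro tendsto_Ppmf_above[OF s _ _ \<phi> lim])
next
  fix b assume "b < A"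
  show "((\<lambda>N. measure_pmf.prob (Ppmf g (\<phi> N)) {n. real n / s N < b}) \<longlongrightarrow> 0) sequentially"
  proof (cases "b > 0")
    case True
    with \<open>b < A\<close> have "b < (A + b) / 2" "((A + b) / 2) powr \<alpha> < A powr \<alpha>"
      using alpha_pos by (auto intro: powr_less_mono2)
    with True show ?thesis by (intro tendsto_Ppmf_below[OF s _ _ lim])
  next
    case False
    have "{n. real n / s N < b} = {}" if "s N > 0" for N
    proof -
      have "b * s N \<le> 0" using False that by (simp add: mult_nonpos_nonneg)
      then show ?thesis using that by (auto simp: divide_less_eq)
    qed
    moreover have "eventually (\<lambda>N. s N > 0) sequentially"
      using s by (simp add: filterlim_at_top_dense)
    ultimately show ?thesis
      by (intro measure_pmf_prob_tendsto_0I[OF tendsto_const]) (auto elim!: eventually_mono)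
  qed
qed

lemma conv_prob_Ppmf_power:
  assumes \<kappa>: "\<kappa> \<ge> 0" and \<beta>: "\<beta> > 0"
  shows "conv_prob (\<lambda>N. Ppmf g (\<kappa> * real N powr \<beta>)) (\<lambda>N n. real n / real N powr (\<beta> / \<alpha>))
           (\<kappa> powr (1 / \<alpha>))"
proof (rule conv_prob_Ppmf_scaled)
  show "filterlim (\<lambda>N. real N powr (\<beta> / \<alpha>)) at_top sequentially"
    using \<beta> alpha_pos
    by (intro filterlim_compose[OF real_powr_at_top filterlim_real_sequentially]) simp
  have "eventually (\<lambda>N. \<kappa> * real N powr \<beta> / (real N powr (\<beta> / \<alpha>)) powr \<alpha> = \<kappa>) sequentially"
    using eventually_gt_at_top[of 0] by eventually_elim (use alpha_pos in \<open>simp add: powr_powr\<close>)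
  moreover have "(\<kappa> powr (1 / \<alpha>)) powr \<alpha> = \<kappa>"
    using \<kappa> alpha_pos by (simp add: powr_powr)
  ultimately show "((\<lambda>N. \<kappa> * real N powr \<beta> / (real N powr (\<beta> / \<alpha>)) powr \<alpha>)
      \<longlongrightarrow> (\<kappa> powr (1 / \<alpha>)) powr \<alpha>) sequentially"
    by (simp add: tendsto_eventually)
qed (use \<kappa> in auto)

lemma conv_prob_Ppmf_subcritical:
  assumes \<kappa>: "\<kappa> \<ge> 0" and \<beta>: "\<beta> < \<alpha>"
  shows "conv_prob (\<lambda>N. Ppmf g (\<kappa> * real N powr \<beta>)) (\<lambda>N n. real n / real N) 0"
proof (rule conv_prob_Ppmf_scaled[OF filterlim_real_sequentially])
  have "((\<lambda>N. \<kappa> * real N powr (\<beta> - \<alpha>)) \<longlongrightarrow> \<kappa> * 0) sequentially"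
    using \<beta> by (intro tendsto_mult tendsto_const tendsto_neg_powr filterlim_real_sequentially) auto
  moreover have "eventually (\<lambda>N. \<kappa> * real N powr (\<beta> - \<alpha>) = \<kappa> * real N powr \<beta> / real N powr \<alpha>)
      sequentially"
    using eventually_gt_at_top[of 0] by eventually_elim (simp add: powr_diff)
  ultimately show "((\<lambda>N. \<kappa> * real N powr \<beta> / real N powr \<alpha>) \<longlongrightarrow> 0 powr \<alpha>) sequentially"
    by (simp add: tendsto_cong[symmetric])
qed (use \<kappa> in auto)

end

section \<open>The product measure\<close>

lemma kjN_less:
  assumes "0 \<le> xj" "xj < 1" "N > 0"
  shows "kjN xj N < N"
proof -
  have "xj * real N < real N" using assms by simp
  then have "\<lfloor>xj * real N\<rfloor> < int N" by (simp add: floor_less_iff)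
  then show ?thesis unfolding kjN_def using assms(3) by (simp add: nat_less_iff)
qed

lemma tendsto_kjN_div:
  assumes "0 \<le> xj"
  shows "((\<lambda>N. real (kjN xj N) / real N) \<longlongrightarrow> xj) sequentially"
  unfolding kjN_def by (rule tendsto_nat_floor_mult_div[OF filterlim_real_sequentially assms])

locale zero_range_sites = zero_range_rate +
  fixes J :: "'j set" and x \<beta> lam :: "'j \<Rightarrow> real" and c :: real
  assumes finite_J: "finite J"
    and x_range: "\<And>j. j \<in> J \<Longrightarrow> 0 \<le> x j \<and> x j < 1"
    and inj_x: "inj_on x J"
    and lam_pos: "\<And>j. j \<in> J \<Longrightarrow> lam j > 0"
    and c_nonneg: "c \<ge> 0"
begin

lemma eventually_sites_separated:
  "eventually (\<lambda>N. N > 0 \<and> inj_on (\<lambda>j. kjN (x j) N) J \<and> (\<forall>j\<in>J. kjN (x j) N < N)) sequentially"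
proof -
  have "eventually (\<lambda>N. kjN (x i) N \<noteq> kjN (x j) N) sequentially"
    if "i \<in> J" "j \<in> J" "i \<noteq> j" for i j
  proof -
    have "((\<lambda>N. real (kjN (x i) N) / real N - real (kjN (x j) N) / real N) \<longlongrightarrow> x i - x j)
        sequentially"
      using that x_range by (intro tendsto_diff tendsto_kjN_div) auto
    moreover have "x i - x j \<noteq> 0" using inj_onD[OF inj_x] that by auto
    ultimately show ?thesis by (auto dest!: tendsto_imp_eventually_ne elim!: eventually_mono)
  qed
  then have "eventually (\<lambda>N. \<forall>i\<in>J. \<forall>j\<in>J. i \<noteq> j \<longrightarrow> kjN (x i) N \<noteq> kjN (x j) N) sequentially"
    using finite_J by (auto simp: eventually_ball_finite_distrib intro!: eventually_ball_finite)
  then show ?thesis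
    using eventually_gt_at_top[of 0]
    by eventually_elim (auto simp: inj_on_def intro!: kjN_less dest: x_range)
qed

lemma map_RN_site:
  assumes "inj_on (\<lambda>j. kjN (x j) N) J" "\<forall>j\<in>J. kjN (x j) N < N" "j \<in> J"
  shows "map_pmf (\<lambda>\<xi>. \<xi> (kjN (x j) N)) (RN g J x \<beta> lam c N)
         = Ppmf g (lam j * real N powr \<beta> j * Phi g c)"
proof -
  have "(SOME i. i \<in> J \<and> kjN (x i) N = kjN (x j) N) = j"
    using assms by (intro some_equality) (auto simp: inj_on_def)
  then show ?thesis
    unfolding RN_def using assms by (subst map_pmf_Pi_pmf_component) auto
qed

lemma conv_prob_RN_site:
  assumes "j \<in> J" and "conv_prob (\<lambda>N. Ppmf g (lam j * real N powr \<beta> j * Phi g c)) X a"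
  shows "conv_prob (\<lambda>N. RN g J x \<beta> lam c N) (\<lambda>N \<xi>. X N (\<xi> (kjN (x j) N))) a"
proof -
  have "eventually (\<lambda>N. map_pmf (\<lambda>\<xi>. \<xi> (kjN (x j) N)) (RN g J x \<beta> lam c N)
                        = Ppmf g (lam j * real N powr \<beta> j * Phi g c)) sequentially"
    using eventually_sites_separated by eventually_elim (use map_RN_site assms(1) in blast)
  then have "conv_prob (\<lambda>N. map_pmf (\<lambda>\<xi>. \<xi> (kjN (x j) N)) (RN g J x \<beta> lam c N)) X a"
    using assms(2) by (subst conv_prob_cong[OF _ always_eventually]) auto
  then show ?thesis by (simp add: conv_prob_map_pmf)
qed

lemma Rmean_Phi_c: "Phi g c \<ge> 0" "Rmean g (Phi g c) = c"
  using Rmean_Phi[OF c_nonneg] by auto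

lemma conv_prob_slow_site:
  assumes j: "j \<in> J" and \<beta>: "\<beta> j > \<alpha>"
  shows "conv_prob (\<lambda>N. RN g J x \<beta> lam c N)
           (\<lambda>N \<xi>. real N powr (- \<beta> j / \<alpha>) * real (\<xi> (kjN (x j) N)))
           ((lam j * Phi g c) powr (1 / \<alpha>))"
proof -
  have "conv_prob (\<lambda>N. Ppmf g (lam j * real N powr \<beta> j * Phi g c))
          (\<lambda>N n. real n / real N powr (\<beta> j / \<alpha>)) ((lam j * Phi g c) powr (1 / \<alpha>))"
    using conv_prob_Ppmf_power[of "lam j * Phi g c" "\<beta> j"] lam_pos[OF j] Rmean_Phi_c \<beta> alpha_pos
    by (simp add: mult_ac)
  from conv_prob_RN_site[OF j this] show ?thesis
    by (simp add: powr_minus divide_inverse mult.commute)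
qed

lemma conv_prob_site_term:
  assumes j: "j \<in> J" and \<beta>: "\<beta> j \<le> \<alpha>" and G: "isCont G (x j)"
  shows "conv_prob (\<lambda>N. RN g J x \<beta> lam c N)
           (\<lambda>N \<xi>. real (\<xi> (kjN (x j) N)) * G (real (kjN (x j) N) / real N) / real N)
           (if \<beta> j = \<alpha> then (lam j * Phi g c) powr (1 / \<alpha>) * G (x j) else 0)"
proof -
  define A where "A = (if \<beta> j = \<alpha> then (lam j * Phi g c) powr (1 / \<alpha>) else 0)"
  have \<kappa>: "lam j * Phi g c \<ge> 0" using lam_pos[OF j] Rmean_Phi_c by simp
  have "conv_prob (\<lambda>N. Ppmf g (lam j * real N powr \<beta> j * Phi g c)) (\<lambda>N n. real n / real N) A"
  proof (cases "\<beta> j = \<alpha>")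
    case True
    then show ?thesis
      using conv_prob_Ppmf_power[OF \<kappa>, of \<alpha>] alpha_pos by (simp add: A_def mult_ac)
  next
    case False
    then show ?thesis
      using conv_prob_Ppmf_subcritical[OF \<kappa>, of "\<beta> j"] \<beta> by (simp add: A_def mult_ac)
  qed
  from conv_prob_RN_site[OF j this]
  have "conv_prob (\<lambda>N. RN g J x \<beta> lam c N)
          (\<lambda>N \<xi>. real (\<xi> (kjN (x j) N)) / real N * G (real (kjN (x j) N) / real N)) (A * G (x j))"
    using x_range[OF j]
    by (intro conv_prob_mult_tendsto isCont_tendsto_compose[OF G] tendsto_kjN_div) auto
  then show ?thesis by (cases "\<beta> j = \<alpha>") (simp_all add: A_def)
qed

lemma conv_prob_bulk_fluctuation:
  assumes Bd: "\<And>t. t \<in> {0..1} \<Longrightarrow> \<bar>G t\<bar> \<le> Bd"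
  shows "conv_prob (\<lambda>N. RN g J x \<beta> lam c N)
           (\<lambda>N \<xi>. \<Sum>k\<in>{..<N} - (\<lambda>j. kjN (x j) N) ` J.
               G (real k / real N) / real N * (real (\<xi> k) - c))
           0"
proof -
  define B where "B N = {..<N} - (\<lambda>j. kjN (x j) N) ` J" for N
  define q where "q = Ppmf g (Phi g c)"
  define h where "h = (\<lambda>n::nat. real n - c)"
  define V where "V = measure_pmf.expectation q (\<lambda>n. h n ^ 2)"
  define Y where "Y N \<xi> = (\<Sum>k\<in>B N. G (real k / real N) / real N * h (\<xi> k))"
    for N and \<xi> :: "nat \<Rightarrow> nat"
  have int: "integrable (measure_pmf q) h" "integrable (measure_pmf q) (\<lambda>n. h n ^ 2)"
    using Ppmf_moments[OF Rmean_Phi_c(1)] by (simp_all add: q_def h_def power2_diff)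
  have centered: "measure_pmf.expectation q h = 0"
    using Ppmf_moments[OF Rmean_Phi_c(1)] Rmean_Phi_c(2) by (simp add: q_def h_def)
  have iid: "(if \<exists>j\<in>J. kjN (x j) N = k then p k else Ppmf g (Phi g c)) = q" if "k \<in> B N" for p N k
    using that by (auto simp: B_def q_def)
  note second_moment = expectation_Pi_pmf_weighted_sum_sq[OF _ _ iid int centered]
  have moment: "measure_pmf.expectation (RN g J x \<beta> lam c N) (\<lambda>\<xi>. Y N \<xi> ^ 2) \<le> Bd ^ 2 / real N * V"
    for N
  proof -
    have "(\<Sum>k\<in>B N. (G (real k / real N) / real N) ^ 2) \<le> Bd ^ 2 / real N"
      by (rule sum_power2_div_le) (auto simp: B_def intro!: Bd)
    then have "(\<Sum>k\<in>B N. (G (real k / real N) / real N) ^ 2) * V \<le> Bd ^ 2 / real N * V"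
      by (rule mult_right_mono) (simp add: V_def)
    moreover have "measure_pmf.expectation (RN g J x \<beta> lam c N) (\<lambda>\<xi>. Y N \<xi> ^ 2)
        = (\<Sum>k\<in>B N. (G (real k / real N) / real N) ^ 2) * V"
      unfolding RN_def Y_def V_def by (rule second_moment(2)) (auto simp: B_def)
    ultimately show ?thesis by simp
  qed
  have "conv_prob (\<lambda>N. RN g J x \<beta> lam c N) Y 0"
  proof (rule conv_prob_second_moment)
    show "integrable (measure_pmf (RN g J x \<beta> lam c N)) (\<lambda>\<xi>. Y N \<xi> ^ 2)" for N
      unfolding RN_def Y_def by (rule second_moment(1)) (auto simp: B_def)
    have lim: "((\<lambda>N. Bd ^ 2 / real N * V) \<longlongrightarrow> 0) sequentially"
      by (intro tendsto_mult_left_zero tendsto_divide_0[OF tendsto_const]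
          filterlim_at_top_imp_at_infinity[OF filterlim_real_sequentially])
    have "0 \<le> measure_pmf.expectation (RN g J x \<beta> lam c N) (\<lambda>\<xi>. Y N \<xi> ^ 2)" for N
      by (rule Bochner_Integration.integral_nonneg) simp
    then show "((\<lambda>N. measure_pmf.expectation (RN g J x \<beta> lam c N) (\<lambda>\<xi>. Y N \<xi> ^ 2)) \<longlongrightarrow> 0)
        sequentially"
      by (intro Lim_null_comparison[OF always_eventually lim]) (use moment in simp)
  qed
  then show ?thesis unfolding Y_def[abs_def] B_def h_def .
qed

lemma conv_prob_bulk:
  assumes G: "continuous_on {0..1} G"
  shows "conv_prob (\<lambda>N. RN g J x \<beta> lam c N)
           (\<lambda>N \<xi>. (\<Sum>k\<in>{..<N} - (\<lambda>j. kjN (x j) N) ` J. real (\<xi> k) * G (real k / real N)) / real N)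
           (c * integral {0..1} G)"
proof -
  define B where "B N = {..<N} - (\<lambda>j. kjN (x j) N) ` J" for N
  obtain Bd where "\<And>t. t \<in> {0..1} \<Longrightarrow> \<bar>G t\<bar> \<le> Bd"
    using compact_imp_bounded[OF compact_continuous_image[OF G compact_Icc]]
    unfolding bounded_iff by fastforce
  from conv_prob_bulk_fluctuation[OF this]
  have "conv_prob (\<lambda>N. RN g J x \<beta> lam c N)
      (\<lambda>N \<xi>. (\<Sum>k\<in>B N. G (real k / real N) / real N * (real (\<xi> k) - c))
               + c * ((\<Sum>k\<in>B N. G (real k / real N)) / real N))
      (0 + c * integral {0..1} G)"
    unfolding B_def using finite_J card_image_le[OF finite_J]
    by (intro conv_prob_add conv_prob_tendsto tendsto_mult tendsto_const
        tendsto_Riemann_sum_omitting[OF G]) auto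
  moreover have "(\<Sum>k\<in>B N. G (real k / real N) / real N * (real (\<xi> k) - c))
        + c * ((\<Sum>k\<in>B N. G (real k / real N)) / real N)
      = (\<Sum>k\<in>B N. real (\<xi> k) * G (real k / real N)) / real N" for N \<xi>
    by (simp add: sum_divide_distrib sum_distrib_left sum.distrib[symmetric] algebra_simps
        diff_divide_distrib)
  ultimately show ?thesis unfolding B_def by simp
qed

lemma pairN_eq_bulk_plus_sites:
  assumes inj: "inj_on (\<lambda>j. kjN (x j) N) J" and less: "\<forall>j\<in>J. kjN (x j) N < N"
  shows "pairN G J x \<beta> \<alpha> N \<xi>
       = (\<Sum>k\<in>{..<N} - (\<lambda>j. kjN (x j) N) ` J. real (\<xi> k) * G (real k / real N)) / real N
         + (\<Sum>j\<in>{j\<in>J. \<beta> j \<le> \<alpha>}. real (\<xi> (kjN (x j) N)) * G (real (kjN (x j) N) / real N) / real N)"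
proof -
  define k where "k j = kjN (x j) N" for j
  define f where "f i = real (\<xi> i) * G (real i / real N)" for i
  have split: "{..<N} - {kjN (x j) N | j. j \<in> J \<and> \<beta> j > \<alpha>} = ({..<N} - k ` J) \<union> k ` {j\<in>J. \<beta> j \<le> \<alpha>}"
    using inj less by (auto simp: k_def inj_on_def not_less)
  have "inj_on k {j\<in>J. \<beta> j \<le> \<alpha>}"
    using inj unfolding k_def by (rule inj_on_subset) auto
  then have "sum f (k ` {j\<in>J. \<beta> j \<le> \<alpha>}) = (\<Sum>j\<in>{j\<in>J. \<beta> j \<le> \<alpha>}. f (k j))"
    by (simp add: sum.reindex)
  moreover have "sum f ({..<N} - {kjN (x j) N | j. j \<in> J \<and> \<beta> j > \<alpha>})
      = sum f ({..<N} - k ` J) + sum f (k ` {j\<in>J. \<beta> j \<le> \<alpha>})"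
    unfolding split using finite_J by (intro sum.union_disjoint) auto
  ultimately show ?thesis
    by (simp add: pairN_def f_def k_def add_divide_distrib sum_divide_distrib)
qed

lemma pairLim_eq:
  "pairLim g G J x \<beta> lam \<alpha> c = c * integral {0..1} G
     + (\<Sum>j\<in>{j\<in>J. \<beta> j \<le> \<alpha>}. if \<beta> j = \<alpha> then (lam j * Phi g c) powr (1 / \<alpha>) * G (x j) else 0)"
proof -
  have "{j \<in> {j\<in>J. \<beta> j \<le> \<alpha>}. \<beta> j = \<alpha>} = {j\<in>J. \<beta> j = \<alpha>}" by auto
  then show ?thesis
    unfolding pairLim_def using finite_J by (simp add: sum.inter_filter[symmetric])
qed

lemma conv_prob_pairN:
  assumes G: "continuous_on UNIV G"
  shows "conv_prob (\<lambda>N. RN g J x \<beta> lam c N) (pairN G J x \<beta> \<alpha>) (pairLim g G J x \<beta> lam \<alpha> c)"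
proof -
  have "continuous_on {0..1} G"
    using continuous_on_subset[OF G] by blast
  moreover have "isCont G t" for t
    using G by (simp add: continuous_on_eq_continuous_at)
  ultimately have "conv_prob (\<lambda>N. RN g J x \<beta> lam c N)
      (\<lambda>N \<xi>. (\<Sum>k\<in>{..<N} - (\<lambda>j. kjN (x j) N) ` J. real (\<xi> k) * G (real k / real N)) / real N
         + (\<Sum>j\<in>{j\<in>J. \<beta> j \<le> \<alpha>}. real (\<xi> (kjN (x j) N)) * G (real (kjN (x j) N) / real N) / real N))
      (pairLim g G J x \<beta> lam \<alpha> c)"
    unfolding pairLim_eq using finite_J
    by (intro conv_prob_add conv_prob_bulk conv_prob_sum conv_prob_site_term) auto
  then show ?thesis
    using eventually_sites_separated
    by (subst conv_prob_cong[OF always_eventually])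
      (auto elim!: eventually_mono simp: pairN_eq_bulk_plus_sites)
qed

end

theorem mainTheorem5:
  fixes g :: "nat \<Rightarrow> real" and gs \<alpha> :: real
    and J :: "'j set" and x \<beta> lam :: "'j \<Rightarrow> real"
    and G :: "real \<Rightarrow> real" and c \<delta> :: real
  assumes g: "n_alpha_type g gs \<alpha>"
    and J: "finite J"
    and x_range: "\<forall>j\<in>J. 0 \<le> x j \<and> x j < 1"
    and x_inj: "inj_on x J"
    and lam: "\<forall>j\<in>J. lam j > 0"
    and G_cont: "continuous_on UNIV G"
    and G_per: "\<forall>t. G (t + 1) = G t"
    and c: "c \<ge> 0"
    and \<delta>: "\<delta> > 0"
  shows "((\<lambda>N. measure_pmf.prob (RN g J x \<beta> lam c N)
             {\<xi>. \<bar>pairN G J x \<beta> \<alpha> N \<xi> - pairLim g G J x \<beta> lam \<alpha> c\<bar> > \<delta>})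
           \<longlongrightarrow> 0) sequentially
       \<and> (\<forall>j\<in>J. \<beta> j > \<alpha> \<longrightarrow>
           ((\<lambda>N. measure_pmf.prob (RN g J x \<beta> lam c N)
             {\<xi>. \<bar>real N powr (- \<beta> j / \<alpha>) * real (\<xi> (kjN (x j) N))
                  - (lam j * Phi g c) powr (1 / \<alpha>)\<bar> > \<delta>})
           \<longlongrightarrow> 0) sequentially)"
proof -
  interpret zero_range_sites g gs \<alpha> J x \<beta> lam c
    using assms by unfold_locales auto
  show ?thesis
    using conv_prob_pairN[OF G_cont] conv_prob_slow_site \<delta> unfolding conv_prob_def by blast
qed

end
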